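(* Let $H$, $B$, $V$, $\gamma$, $A(\cdot)$, $c$, $\Gamma$, $\|A\|$ be as in the context, and assume moreover that $\gamma\in L(V)$ (i.e. $\gamma$ maps $V$ into $V$ boundedly) and that there are constants $\rho>0$, $\eta>0$ with $$\langle Bv,\gamma v\rangle\ge \rho|v|^2+\eta\|v\|^2\quad\text{for all } v\in V.$$ Assume $$\|A\|<\sqrt{c\rho+\tfrac{c^2}{4}\Gamma^2}-\tfrac{c}{2}\Gamma .$$ Then there exist constants $\delta>0$ and $M>0$ such that every (mild) solution $u$ of $$u''(t)+\big[B+A(t)\big]u(t)+\gamma u'(t)=0,\quad t\ge 0,\qquad u(0)=u_0\in V,\ u'(0)=u_1\in H,$$ satisfies $$\|u(t)\|^2+|u'(t)|^2\le M\big[\|u(s)\|^2+|u'(s)|^2\big]e^{-\delta(t-s)}\quad\text{whenever } 0\le s\le t.$$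
   Context: $H$ is a real Hilbert space with inner product $\langle\cdot,\cdot\rangle$ and norm $|\cdot|$. $B$ is a self-adjoint linear operator on $H$ with dense domain, coercive: there is $b>0$ with $\langle Bv,v\rangle\ge b|v|^2$ for all $v$ in its domain. $V=D(B^{1/2})$ with norm $\|v\|=|B^{1/2}v|$; $V'$ is its dual, $B$ is identified with its extension in $L(V,V')$, and the $V'\times V$ duality pairing is also written $\langle\cdot,\cdot\rangle$. $\gamma\in L(H)$ satisfies $\langle\gamma v,v\rangle\ge c|v|^2$ for all $v\in H$, for some constant $c>0$, and $\Gamma=\|\gamma\|_{L(H)}$. $A\in L^\infty(\mathbb{R}^+,L(H))$ and $\|A\|=\operatorname{ess\,sup}_{t\ge0}\|A(t)\|_{L(H)}$. A mild solution is a function $u\in C([0,\infty),V)\cap C^1([0,\infty),H)\cap W^{2,\infty}_{\mathrm{loc}}([0,\infty),V')$ satisfying the equation in $V'$ for a.e. $t$ and the initial conditions. *)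

theory Defs
  imports "HOL-Analysis.Analysis" "HOL-Probability.Essential_Supremum"
begin

text \<open>An (unbounded) linear operator T on a real Hilbert space with domain D is
  modelled as a function T together with its domain D (values of T outside D
  are irrelevant).\<close>

definition lin_op_on :: "'h::real_inner set \<Rightarrow> ('h \<Rightarrow> 'h) \<Rightarrow> bool" where
  "lin_op_on D T \<longleftrightarrow> subspace D \<and>
     (\<forall>x\<in>D. \<forall>y\<in>D. T (x + y) = T x + T y) \<and> (\<forall>x\<in>D. \<forall>a::real. T (a *\<^sub>R x) = a *\<^sub>R T x)"

text \<open>Densely defined self-adjoint operator: T is symmetric on its dense domain D,
  and the domain of the adjoint, i.e. the set of v for which some w satisfies
  inner (T u) v = inner u w for all u in D, is contained in D.\<close>

definition self_adjoint_op :: "'h::real_inner set \<Rightarrow> ('h \<Rightarrow> 'h) \<Rightarrow> bool" where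
  "self_adjoint_op D T \<longleftrightarrow> lin_op_on D T \<and> closure D = UNIV \<and>
     (\<forall>u\<in>D. \<forall>v\<in>D. inner (T u) v = inner u (T v)) \<and>
     (\<forall>v w. (\<forall>u\<in>D. inner (T u) v = inner u w) \<longrightarrow> v \<in> D)"

text \<open>(DS, S) is the nonnegative self-adjoint square root of the operator (D, T),
  i.e. S = T^(1/2) with domain DS: S is self-adjoint and nonnegative, and S o S = T
  as unbounded operators (same domain, same values).\<close>

definition is_sqrt_op :: "'h::real_inner set \<Rightarrow> ('h \<Rightarrow> 'h) \<Rightarrow> 'h set \<Rightarrow> ('h \<Rightarrow> 'h) \<Rightarrow> bool" where
  "is_sqrt_op D T DS S \<longleftrightarrow> self_adjoint_op DS S \<and> (\<forall>x\<in>DS. inner (S x) x \<ge> 0) \<and>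
     D = {x \<in> DS. S x \<in> DS} \<and> (\<forall>x\<in>D. S (S x) = T x)"

text \<open>Mild solution of u'' + (B + A(t)) u + gamma u' = 0 on [0,oo), where V = DS with
  norm |S v| (S = B^(1/2)), and the V'-V pairing <B w, v> = inner (S w) (S v).
  u' is the (H-valued) derivative of u.  The requirement
  u' in W^{2,infty}_loc([0,oo),V') together with the equation in V' for a.e. t is
  expressed by testing against every v in V: the scalar function
  t |-> inner (u' t) v is the indefinite integral of
  -(<B u(r), v> + inner (A r (u r)) v + inner (gamma (u' r)) v).\<close>

definition mild_solution ::
  "'h::{real_inner,complete_space} set \<Rightarrow> ('h \<Rightarrow> 'h) \<Rightarrow> ('h \<Rightarrow>\<^sub>L 'h) \<Rightarrow> (real \<Rightarrow> ('h \<Rightarrow>\<^sub>L 'h))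
     \<Rightarrow> (real \<Rightarrow> 'h) \<Rightarrow> (real \<Rightarrow> 'h) \<Rightarrow> bool" where
  "mild_solution DS S \<gamma> A u u' \<longleftrightarrow>
     (\<forall>t\<ge>0. u t \<in> DS) \<and>
     continuous_on {0..} u \<and> continuous_on {0..} (\<lambda>t. S (u t)) \<and>
     (\<forall>t\<ge>0. (u has_vector_derivative u' t) (at t within {0..})) \<and>
     continuous_on {0..} u' \<and>
     (\<forall>v\<in>DS. \<forall>t\<ge>0.
        ((\<lambda>r. - (inner (S (u r)) (S v) + inner (blinfun_apply (A r) (u r)) v
                   + inner (blinfun_apply \<gamma> (u' r)) v))
          has_integral (inner (u' t) v - inner (u' 0) v)) {0..t})"

end

theory Submission
  imports Defs
begin

(* Testing the equation against v in V and estimating A(t) u by an essential bound a of ||A(t)||,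
   the weak form of the equation without A holds up to an error |v| times the integral of a |u|.
   Testing instead along the central difference quotients of u (which converge uniformly to u')
   and along gamma u yields integral inequalities for the energy ||u||^2 + |u'|^2 and for
   <u', gamma u>.  Together they show that the Lyapunov function
   L = ||u||^2 + |u'|^2 + <u', gamma u> + |gamma u|^2 / 2 satisfies
   L(t) - L(s) <= integral from s to t of 2a|u||u'| + a|u||gamma u| - <gamma u', u'> - <B u, gamma u>.
   The smallness of a makes the quadratic form 2axy + a||gamma||x^2 - rho x^2 - c y^2 negative
   definite, so the integrand is at most -delta L; a Gronwall argument gives exponential decay of L,
   and L is equivalent to ||u||^2 + |u'|^2 because rho |u|^2 <= <B u, gamma u> <= K ||u||^2. *)

lemma continuous_on_Icc_bounded:
  fixes f :: "real \<Rightarrow> 'a::real_normed_vector"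
  assumes "continuous_on {s..t} f"
  obtains B where "B > 0" "\<And>x. x \<in> {s..t} \<Longrightarrow> norm (f x) \<le> B"
  using compact_imp_bounded[OF compact_continuous_image[OF assms compact_Icc]]
  by (auto simp: bounded_pos)

lemma continuous_on_Icc_uniformly:
  fixes f :: "real \<Rightarrow> 'a::real_normed_vector"
  assumes "continuous_on {s..t} f" "e > 0"
  obtains d where "d > 0" "\<And>x y. x \<in> {s..t} \<Longrightarrow> y \<in> {s..t} \<Longrightarrow> \<bar>y - x\<bar> < d \<Longrightarrow> norm (f y - f x) < e"
proof -
  have "uniformly_continuous_on {s..t} f"
    using assms(1) compact_uniformly_continuous by blast
  with assms(2) obtain d where "d > 0" "\<forall>x\<in>{s..t}. \<forall>y\<in>{s..t}. dist y x < d \<longrightarrow> dist (f y) (f x) < e"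
    unfolding uniformly_continuous_on_def by metis
  then show thesis
    by (intro that[of d]) (auto simp: dist_norm)
qed

lemma continuous_on_Icc_of_atLeast:
  fixes f :: "real \<Rightarrow> 'a::topological_space"
  assumes "continuous_on {0..} f" "0 \<le> s"
  shows "continuous_on {s..t} f"
  by (rule continuous_on_subset[OF assms(1)]) (use assms(2) in auto)

lemma increment_le_of_local_increment_le:
  fixes F G :: "real \<Rightarrow> real"
  assumes "s \<le> t"
    and local: "\<And>e. e > 0 \<Longrightarrow> \<exists>d>0. \<forall>x y. s \<le> x \<longrightarrow> x \<le> y \<longrightarrow> y \<le> t \<longrightarrow> y - x < d \<longrightarrow>
                  F y - F x \<le> G y - G x + e * (y - x)"
  shows "F t - F s \<le> G t - G s"
proof -
  have approx: "F t - F s \<le> G t - G s + e * (t - s)" if "e > 0" for e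
  proof -
    obtain d where "d > 0" and d: "\<And>x y. s \<le> x \<Longrightarrow> x \<le> y \<Longrightarrow> y \<le> t \<Longrightarrow> y - x < d \<Longrightarrow>
        F y - F x \<le> G y - G x + e * (y - x)"
      using local[OF \<open>e > 0\<close>] by blast
    obtain n :: nat where n: "(t - s) / d < real n"
      using reals_Archimedean2 by blast
    moreover have "0 \<le> (t - s) / d"
      using \<open>d > 0\<close> \<open>s \<le> t\<close> by simp
    ultimately have "n > 0"
      by (metis of_nat_0_less_iff order_le_less_trans)
    define h where "h = (t - s) / n"
    have "h \<ge> 0" "h < d"
      using \<open>s \<le> t\<close> \<open>n > 0\<close> n \<open>d > 0\<close> by (auto simp: h_def field_simps)
    have "F (s + k * h) - F s \<le> G (s + k * h) - G s + e * (k * h)" if "k \<le> n" for k :: nat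
      using that
    proof (induction k)
      case (Suc k)
      have "real (Suc k) * h \<le> n * h"
        using Suc.prems \<open>h \<ge> 0\<close> by (intro mult_right_mono) auto
      then have "s + Suc k * h \<le> t"
        using \<open>n > 0\<close> by (simp add: h_def)
      then have "F (s + Suc k * h) - F (s + k * h) \<le> G (s + Suc k * h) - G (s + k * h) + e * h"
        using d[of "s + k * h" "s + Suc k * h"] \<open>h \<ge> 0\<close> \<open>h < d\<close> by (simp add: algebra_simps)
      with Suc show ?case
        by (simp add: algebra_simps)
    qed simp
    from this[of n] \<open>n > 0\<close> show ?thesis
      by (simp add: h_def)
  qed
  show ?thesis
  proof (rule field_le_epsilon)
    fix e :: real
    assume "e > 0"
    with \<open>s \<le> t\<close> have "e / (t - s + 1) * (t - s) \<le> e"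
      by (simp add: field_simps)
    with approx[of "e / (t - s + 1)"] \<open>e > 0\<close> \<open>s \<le> t\<close> show "F t - F s \<le> G t - G s + e"
      by simp
  qed
qed

lemma exp_weighted_increment_le:
  fixes L :: "real \<Rightarrow> real"
  assumes "x \<le> y" "\<delta> > 0" "L x \<ge> 0" "L integrable_on {x..y}"
    and near: "\<And>r. r \<in> {x..y} \<Longrightarrow> L x - \<omega> \<le> L r"
    and decrease: "L y - L x \<le> - \<delta> * integral {x..y} L"
  shows "exp (\<delta> * y) * L y - exp (\<delta> * x) * L x \<le> \<delta> * exp (\<delta> * y) * \<omega> * (y - x)"
proof -
  have "(y - x) * (L x - \<omega>) \<le> integral {x..y} L"
    using integral_le[OF integrable_const_ivl \<open>L integrable_on {x..y}\<close> near] \<open>x \<le> y\<close> by simp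
  then have "\<delta> * ((y - x) * (L x - \<omega>)) \<le> \<delta> * integral {x..y} L"
    using \<open>\<delta> > 0\<close> by (intro mult_left_mono) auto
  with decrease have "L y - L x \<le> - \<delta> * ((y - x) * (L x - \<omega>))"
    by linarith
  then have 1: "exp (\<delta> * y) * (L y - L x) \<le> exp (\<delta> * y) * (- \<delta> * ((y - x) * (L x - \<omega>)))"
    by (intro mult_left_mono) auto
  have "exp (\<delta> * y) * (1 - \<delta> * (y - x)) \<le> exp (\<delta> * y) * exp (- \<delta> * (y - x))"
    using exp_ge_add_one_self[of "- \<delta> * (y - x)"] by (intro mult_left_mono) auto
  also have "\<dots> = exp (\<delta> * x)"
    by (simp add: exp_add[symmetric] algebra_simps)
  finally have "(exp (\<delta> * y) - exp (\<delta> * x)) * L x \<le> (\<delta> * (y - x) * exp (\<delta> * y)) * L x"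
    using \<open>L x \<ge> 0\<close> by (intro mult_right_mono) (auto simp: algebra_simps)
  with 1 show ?thesis
    by (simp add: algebra_simps)
qed

lemma gronwall_decay:
  fixes L :: "real \<Rightarrow> real"
  assumes "s \<le> t" "continuous_on {s..t} L" "\<And>r. r \<in> {s..t} \<Longrightarrow> 0 \<le> L r" "\<delta> > 0"
    and decrease: "\<And>x y. s \<le> x \<Longrightarrow> x \<le> y \<Longrightarrow> y \<le> t \<Longrightarrow> L y - L x \<le> - \<delta> * integral {x..y} L"
  shows "L t \<le> L s * exp (- \<delta> * (t - s))"
proof -
  have "exp (\<delta> * t) * L t - exp (\<delta> * s) * L s \<le> 0 - 0"
  proof (rule increment_le_of_local_increment_le[OF \<open>s \<le> t\<close>])
    fix e :: real
    assume "e > 0"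
    define \<omega> where "\<omega> = e / (\<delta> * exp (\<delta> * t) + 1)"
    have "\<omega> > 0"
      using \<open>e > 0\<close> \<open>\<delta> > 0\<close> by (simp add: \<omega>_def add_pos_nonneg)
    have "\<delta> * exp (\<delta> * t) * \<omega> = e * (\<delta> * exp (\<delta> * t) / (\<delta> * exp (\<delta> * t) + 1))"
      by (simp add: \<omega>_def)
    also have "\<dots> \<le> e"
      using \<open>e > 0\<close> \<open>\<delta> > 0\<close> by (intro mult_left_le) (auto simp: add_pos_nonneg)
    finally have "\<delta> * exp (\<delta> * t) * \<omega> \<le> e" .
    obtain d where "d > 0" and d: "\<And>x y. x \<in> {s..t} \<Longrightarrow> y \<in> {s..t} \<Longrightarrow> \<bar>y - x\<bar> < d \<Longrightarrow> norm (L y - L x) < \<omega>"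
      using continuous_on_Icc_uniformly[OF assms(2) \<open>\<omega> > 0\<close>] by blast
    have "exp (\<delta> * y) * L y - exp (\<delta> * x) * L x \<le> 0 - 0 + e * (y - x)"
      if xy: "s \<le> x" "x \<le> y" "y \<le> t" "y - x < d" for x y
    proof -
      have "L integrable_on {x..y}"
        using xy by (intro integrable_continuous_real continuous_on_subset[OF assms(2)]) auto
      moreover have "L x - \<omega> \<le> L r" if "r \<in> {x..y}" for r
        using d[of x r] xy that by (auto simp: abs_less_iff)
      ultimately have "exp (\<delta> * y) * L y - exp (\<delta> * x) * L x \<le> \<delta> * exp (\<delta> * y) * \<omega> * (y - x)"
        using xy assms(3) \<open>\<delta> > 0\<close> decrease by (intro exp_weighted_increment_le) auto
      also have "\<dots> \<le> \<delta> * exp (\<delta> * t) * \<omega> * (y - x)"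
        using xy \<open>\<delta> > 0\<close> \<open>\<omega> > 0\<close> by (intro mult_right_mono) auto
      also have "\<dots> \<le> e * (y - x)"
        using xy \<open>\<delta> * exp (\<delta> * t) * \<omega> \<le> e\<close> by (intro mult_right_mono) auto
      finally show ?thesis by simp
    qed
    with \<open>d > 0\<close> show "\<exists>d>0. \<forall>x y. s \<le> x \<longrightarrow> x \<le> y \<longrightarrow> y \<le> t \<longrightarrow> y - x < d \<longrightarrow>
        exp (\<delta> * y) * L y - exp (\<delta> * x) * L x \<le> 0 - 0 + e * (y - x)"
      by blast
  qed
  then have "exp (\<delta> * t) * L t \<le> exp (\<delta> * t) * (L s * exp (- \<delta> * (t - s)))"
    by (simp add: exp_diff algebra_simps)
  then show ?thesis
    by simp
qed

lemma quadratic_form_margin: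
  fixes P c a :: real
  assumes "P > 0" "c > 0" "a\<^sup>2 < c * P"
  obtains \<kappa> where "\<kappa> > 0" "\<And>x y. 2 * a * x * y \<le> (P - \<kappa>) * x\<^sup>2 + (c - \<kappa>) * y\<^sup>2"
proof
  define \<kappa> where "\<kappa> = min (min P c / 2) ((c * P - a\<^sup>2) / (c + P))"
  show "\<kappa> > 0"
    using assms by (simp add: \<kappa>_def)
  have "P - \<kappa> > 0"
    using assms by (simp add: \<kappa>_def)
  have "\<kappa> \<le> (c * P - a\<^sup>2) / (c + P)"
    by (simp add: \<kappa>_def)
  then have "\<kappa> * (c + P) \<le> c * P - a\<^sup>2"
    using assms by (simp add: pos_le_divide_eq)
  moreover have "(P - \<kappa>) * (c - \<kappa>) = c * P - \<kappa> * (c + P) + \<kappa>\<^sup>2"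
    by (simp add: algebra_simps power2_eq_square)
  ultimately have "(P - \<kappa>) * (c - \<kappa>) \<ge> a\<^sup>2"
    using zero_le_power2[of \<kappa>] by linarith
  fix x y :: real
  have "(P - \<kappa>) * ((P - \<kappa>) * x\<^sup>2 - 2 * a * x * y + (c - \<kappa>) * y\<^sup>2)
      = ((P - \<kappa>) * x - a * y)\<^sup>2 + ((P - \<kappa>) * (c - \<kappa>) - a\<^sup>2) * y\<^sup>2"
    by (simp add: algebra_simps power2_eq_square)
  also have "\<dots> \<ge> 0"
    using \<open>(P - \<kappa>) * (c - \<kappa>) \<ge> a\<^sup>2\<close> by simp
  finally show "2 * a * x * y \<le> (P - \<kappa>) * x\<^sup>2 + (c - \<kappa>) * y\<^sup>2"
    using \<open>P - \<kappa> > 0\<close> by (simp add: zero_le_mult_iff)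
qed

lemma integral_tendsto_of_uniform_limit:
  fixes f :: "'b \<Rightarrow> real \<Rightarrow> 'a::banach"
  assumes "s \<le> t" "uniform_limit {s..t} f g F"
    and "\<forall>\<^sub>F n in F. f n integrable_on {s..t}" "g integrable_on {s..t}"
  shows "((\<lambda>n. integral {s..t} (f n)) \<longlongrightarrow> integral {s..t} g) F"
proof (rule tendstoI)
  fix e :: real
  assume "e > 0"
  define e' where "e' = e / (t - s + 1)"
  have "e' > 0" "e' * (t - s) < e"
    using \<open>e > 0\<close> \<open>s \<le> t\<close> by (auto simp: e'_def field_simps)
  with assms(2,3) have "\<forall>\<^sub>F n in F. (\<forall>r\<in>{s..t}. dist (f n r) (g r) < e') \<and> f n integrable_on {s..t}"
    by (intro eventually_conj uniform_limitD) auto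
  then show "\<forall>\<^sub>F n in F. dist (integral {s..t} (f n)) (integral {s..t} g) < e"
  proof eventually_elim
    case (elim n)
    then have "norm (integral {s..t} (\<lambda>r. f n r - g r)) \<le> integral {s..t} (\<lambda>r. e')"
      using assms(4) by (intro integral_norm_bound_integral integrable_diff) (auto simp: dist_norm less_imp_le)
    with elim assms(4) \<open>s \<le> t\<close> \<open>e' * (t - s) < e\<close> show ?case
      by (simp add: dist_norm integral_diff mult.commute)
  qed
qed

lemma average_integral_tendsto:
  fixes P :: "real \<Rightarrow> real \<Rightarrow> real"
  assumes cont: "\<forall>\<^sub>F h in at_right 0. continuous_on {x-h..x} (P h)"
    and near: "\<And>e. e > 0 \<Longrightarrow> \<forall>\<^sub>F h in at_right 0. \<forall>r\<in>{x-h..x}. \<bar>P h r - c\<bar> \<le> e"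
  shows "((\<lambda>h. integral {x-h..x} (P h) / h) \<longlongrightarrow> c) (at_right 0)"
proof (rule tendstoI)
  fix e :: real
  assume "e > 0"
  have "\<forall>\<^sub>F h in at_right 0. 0 < h \<and> continuous_on {x-h..x} (P h) \<and> (\<forall>r\<in>{x-h..x}. \<bar>P h r - c\<bar> \<le> e / 2)"
    using cont near[of "e / 2"] \<open>e > 0\<close> by (auto intro: eventually_conj simp: eventually_at_right_less)
  then show "\<forall>\<^sub>F h in at_right 0. dist (integral {x-h..x} (P h) / h) c < e"
  proof eventually_elim
    case (elim h)
    then have int: "P h integrable_on {x-h..x}"
      by (blast intro: integrable_continuous_real)
    have "norm (integral {x-h..x} (\<lambda>r. P h r - c)) \<le> integral {x-h..x} (\<lambda>r. e / 2)"
      using elim int by (intro integral_norm_bound_integral integrable_diff) auto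
    moreover have "integral {x-h..x} (\<lambda>r. P h r - c) = integral {x-h..x} (P h) - h * c"
      using elim integral_diff[OF int integrable_const_ivl, of c] by simp
    ultimately have "\<bar>integral {x-h..x} (P h) - h * c\<bar> \<le> h * (e / 2)"
      using elim by simp
    then have "\<bar>integral {x-h..x} (P h) / h - c\<bar> \<le> e / 2"
      using elim by (simp add: field_simps abs_le_iff)
    with \<open>e > 0\<close> show ?case
      by (simp add: dist_real_def)
  qed
qed

lemma inner_shift_near_norm_square:
  fixes \<phi> :: "real \<Rightarrow> 'a::real_inner"
  assumes "continuous_on {0..} \<phi>" "x > 0" "e > 0"
  shows "\<forall>\<^sub>F h in at_right 0. \<forall>r\<in>{x-h..x}. \<bar>inner (\<phi> r) (\<phi> (r + h)) - (norm (\<phi> x))\<^sup>2\<bar> \<le> e"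
proof -
  define e' where "e' = min 1 (e / (2 * norm (\<phi> x) + 1))"
  have "0 < 2 * norm (\<phi> x) + 1"
    by (simp add: add_nonneg_pos)
  then have "e' > 0" "e' \<le> 1"
    using \<open>e > 0\<close> by (auto simp: e'_def)
  have "e' \<le> e / (2 * norm (\<phi> x) + 1)"
    by (simp add: e'_def)
  with \<open>0 < 2 * norm (\<phi> x) + 1\<close> have "e' * (2 * norm (\<phi> x) + 1) \<le> e"
    by (simp add: pos_le_divide_eq)
  obtain d where "d > 0" and d: "\<And>y. y \<in> {0..} \<Longrightarrow> dist y x < d \<Longrightarrow> dist (\<phi> y) (\<phi> x) < e'"
    using assms(1) \<open>x > 0\<close> \<open>e' > 0\<close> unfolding continuous_on_iff by (metis atLeast_iff less_imp_le)
  have "\<forall>\<^sub>F h in at_right 0. h < min d x"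
    using eventually_at_right_real[of 0 "min d x"] \<open>d > 0\<close> \<open>x > 0\<close> by (auto elim: eventually_mono)
  then show ?thesis
  proof (rule eventually_mono, intro ballI)
    fix h r
    assume "h < min d x" and r: "r \<in> {x-h..x}"
    then have near: "norm (\<phi> r - \<phi> x) \<le> e'" "norm (\<phi> (r + h) - \<phi> x) \<le> e'"
      using d[of r] d[of "r + h"] by (auto simp: dist_norm dist_real_def abs_le_iff)
    then have "norm (\<phi> r - \<phi> x) * norm (\<phi> (r + h) - \<phi> x) \<le> e' * e'"
        "norm (\<phi> r - \<phi> x) * norm (\<phi> x) \<le> e' * norm (\<phi> x)"
        "norm (\<phi> x) * norm (\<phi> (r + h) - \<phi> x) \<le> norm (\<phi> x) * e'"
      using \<open>e' > 0\<close> by (auto intro: mult_mono mult_right_mono mult_left_mono)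
    moreover have "inner (\<phi> r) (\<phi> (r + h)) - (norm (\<phi> x))\<^sup>2
        = inner (\<phi> r - \<phi> x) (\<phi> (r + h) - \<phi> x) + inner (\<phi> r - \<phi> x) (\<phi> x) + inner (\<phi> x) (\<phi> (r + h) - \<phi> x)"
      by (simp add: inner_diff_left inner_diff_right power2_norm_eq_inner inner_commute)
    ultimately have "\<bar>inner (\<phi> r) (\<phi> (r + h)) - (norm (\<phi> x))\<^sup>2\<bar> \<le> e' * e' + e' * norm (\<phi> x) + norm (\<phi> x) * e'"
      using Cauchy_Schwarz_ineq2[of "\<phi> r - \<phi> x" "\<phi> (r + h) - \<phi> x"] Cauchy_Schwarz_ineq2[of "\<phi> r - \<phi> x" "\<phi> x"]
        Cauchy_Schwarz_ineq2[of "\<phi> x" "\<phi> (r + h) - \<phi> x"]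
      by linarith
    also have "\<dots> \<le> e' * (2 * norm (\<phi> x) + 1)"
      using \<open>e' \<le> 1\<close> \<open>e' > 0\<close> by (simp add: algebra_simps mult_left_le)
    finally show "\<bar>inner (\<phi> r) (\<phi> (r + h)) - (norm (\<phi> x))\<^sup>2\<bar> \<le> e"
      using \<open>e' * (2 * norm (\<phi> x) + 1) \<le> e\<close> by linarith
  qed
qed

section \<open>Central difference quotients\<close>

definition central_quotient :: "(real \<Rightarrow> 'a::real_normed_vector) \<Rightarrow> real \<Rightarrow> real \<Rightarrow> 'a" where
  "central_quotient f h r = (1 / (2 * h)) *\<^sub>R (f (r + h) - f (r - h))"

lemma integral_inner_self_central_quotient:
  fixes \<phi> :: "real \<Rightarrow> 'a::real_inner"
  assumes "continuous_on {0..} \<phi>" "0 < h" "h \<le> s" "s \<le> t"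
  defines "P \<equiv> \<lambda>r. inner (\<phi> r) (\<phi> (r + h))"
  shows "integral {s..t} (\<lambda>r. inner (\<phi> r) (central_quotient \<phi> h r))
    = (integral {t-h..t} P / h - integral {s-h..s} P / h) / 2"
proof -
  have "continuous_on {s-h..t} P"
    unfolding P_def using assms(2-4)
    by (intro continuous_intros continuous_on_subset[OF assms(1)] continuous_on_compose2[OF assms(1)]) auto
  then have int: "P integrable_on {s-h..t}"
    by (rule integrable_continuous_real)
  then have int_sub: "P integrable_on {s..t}" "P integrable_on {s-h..t-h}"
    using assms(2) by (auto elim: integrable_subinterval_real)
  have shifted: "integral {s..t} (\<lambda>r. inner (\<phi> r) (\<phi> (r - h))) = integral {s-h..t-h} P"
    using integral_shift_Icc_real[of s t P "-h"] by (simp add: P_def o_def inner_commute)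
  have combine: "integral {s-h..s} P + integral {s..t} P = integral {s-h..t} P"
       "integral {s-h..t-h} P + integral {t-h..t} P = integral {s-h..t} P"
    using assms(2-4) int by (auto intro: Henstock_Kurzweil_Integration.integral_combine)
  have "(\<lambda>r. inner (\<phi> r) (\<phi> (r - h))) integrable_on {s..t}"
    using assms(2-4)
    by (intro integrable_continuous_real continuous_intros continuous_on_subset[OF assms(1)]
        continuous_on_compose2[OF assms(1)]) auto
  then have "integral {s..t} (\<lambda>r. inner (\<phi> r) (central_quotient \<phi> h r))
      = (integral {s..t} P - integral {s..t} (\<lambda>r. inner (\<phi> r) (\<phi> (r - h)))) / (2 * h)"
    using int_sub(1) by (simp add: central_quotient_def P_def inner_diff_right integral_diff)
  with combine shifted assms(2) show ?thesis
    by (simp add: field_simps)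
qed

lemma integral_inner_self_central_quotient_tendsto:
  fixes \<phi> :: "real \<Rightarrow> 'a::real_inner"
  assumes "continuous_on {0..} \<phi>" "0 < s" "s \<le> t"
  shows "((\<lambda>h. integral {s..t} (\<lambda>r. inner (\<phi> r) (central_quotient \<phi> h r)))
      \<longlongrightarrow> ((norm (\<phi> t))\<^sup>2 - (norm (\<phi> s))\<^sup>2) / 2) (at_right 0)"
proof -
  define P where "P = (\<lambda>h r. inner (\<phi> r) (\<phi> (r + h)))"
  have average: "((\<lambda>h. integral {x-h..x} (P h) / h) \<longlongrightarrow> (norm (\<phi> x))\<^sup>2) (at_right 0)" if "x > 0" for x
  proof (rule average_integral_tendsto)
    show "\<forall>\<^sub>F h in at_right 0. continuous_on {x-h..x} (P h)"
      using eventually_at_right_real[OF \<open>x > 0\<close>] unfolding P_def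
    proof (rule eventually_mono)
      fix h assume "h \<in> {0<..<x}"
      then show "continuous_on {x-h..x} (\<lambda>r. inner (\<phi> r) (\<phi> (r + h)))"
        by (intro continuous_intros continuous_on_subset[OF assms(1)] continuous_on_compose2[OF assms(1)]) auto
    qed
  qed (use inner_shift_near_norm_square[OF assms(1) \<open>x > 0\<close>] in \<open>simp add: P_def\<close>)
  have "\<forall>\<^sub>F h in at_right 0. (integral {t-h..t} (P h) / h - integral {s-h..s} (P h) / h) / 2
      = integral {s..t} (\<lambda>r. inner (\<phi> r) (central_quotient \<phi> h r))"
    using eventually_at_right_real[OF \<open>0 < s\<close>]
    by (rule eventually_mono) (use integral_inner_self_central_quotient[OF assms(1) _ _ \<open>s \<le> t\<close>] in \<open>auto simp: P_def\<close>)
  moreover have "((\<lambda>h. (integral {t-h..t} (P h) / h - integral {s-h..s} (P h) / h) / 2)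
      \<longlongrightarrow> ((norm (\<phi> t))\<^sup>2 - (norm (\<phi> s))\<^sup>2) / 2) (at_right 0)"
    using assms(2,3) by (intro tendsto_intros average) auto
  ultimately show ?thesis
    by (rule Lim_transform_eventually[rotated])
qed

lemma central_quotient_uniform_limit:
  fixes u u' :: "real \<Rightarrow> 'a::real_normed_vector"
  assumes der: "\<And>t. t \<ge> 0 \<Longrightarrow> (u has_vector_derivative u' t) (at t within {0..})"
    and "continuous_on {0..} u'" "0 < s"
  shows "uniform_limit {s..t} (central_quotient u) u' (at_right 0)"
proof (rule uniform_limitI)
  fix e :: real
  assume "e > 0"
  have "continuous_on {0..t+s} u'"
    using assms(2) by (rule continuous_on_Icc_of_atLeast) simp
  then obtain d where "d > 0" and d: "\<And>x y. x \<in> {0..t+s} \<Longrightarrow> y \<in> {0..t+s} \<Longrightarrow> \<bar>y - x\<bar> < d \<Longrightarrow> norm (u' y - u' x) < e / 2"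
    using continuous_on_Icc_uniformly[OF _ half_gt_zero[OF \<open>e > 0\<close>]] by blast
  have "\<forall>\<^sub>F h in at_right 0. h \<in> {0<..<min d s}"
    using \<open>d > 0\<close> \<open>0 < s\<close> by (intro eventually_at_right_real) auto
  then show "\<forall>\<^sub>F h in at_right 0. \<forall>r\<in>{s..t}. dist (central_quotient u h r) (u' r) < e"
  proof (rule eventually_mono, intro ballI)
    fix h r
    assume h: "h \<in> {0<..<min d s}" and r: "r \<in> {s..t}"
    have "norm (u (r + h) - u (r - h) - ((r + h) - (r - h)) *\<^sub>R u' r) \<le> norm ((r + h) - (r - h)) * (e / 2)"
    proof (rule vector_differentiable_bound_linearization)
      show "(u has_vector_derivative u' x) (at x within {r-h..r+h})" if "x \<in> {r-h..r+h}" for x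
        using that h r by (intro has_vector_derivative_within_subset[OF der]) auto
      show "norm (u' x - u' r) \<le> e / 2" if "x \<in> {r-h..r+h}" for x
        using d[of r x] that h r by (force simp: abs_le_iff abs_less_iff)
    qed (use h in \<open>auto simp: closed_segment_eq_real_ivl\<close>)
    moreover have "central_quotient u h r - u' r = (1 / (2 * h)) *\<^sub>R (u (r + h) - u (r - h) - (2 * h) *\<^sub>R u' r)"
      using h by (simp add: central_quotient_def algebra_simps)
    ultimately have "norm (central_quotient u h r - u' r) \<le> e / 2"
      using h by (simp add: divide_le_eq mult.commute)
    with \<open>e > 0\<close> show "dist (central_quotient u h r) (u' r) < e"
      by (simp add: dist_norm)
  qed
qed

section \<open>Essential bounds and the damping threshold\<close>

lemma integral_norm_bound_integral_AE:
  fixes f :: "real \<Rightarrow> 'a::banach"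
  assumes "f integrable_on {s..t}" "g integrable_on {s..t}"
    and "AE r in lborel. r \<in> {s..t} \<longrightarrow> norm (f r) \<le> g r"
  shows "norm (integral {s..t} f) \<le> integral {s..t} g"
proof -
  obtain N where "negligible N" and N: "{r. \<not> (r \<in> {s..t} \<longrightarrow> norm (f r) \<le> g r)} \<subseteq> N"
    using AE_completion[OF assms(3), unfolded eventually_ae_filter_negligible] by blast
  define f' where "f' r = (if r \<in> N then 0 else f r)" for r
  define g' where "g' r = (if r \<in> N then 0 else g r)" for r
  have "integral {s..t} f = integral {s..t} f'" "integral {s..t} g = integral {s..t} g'"
    using \<open>negligible N\<close> by (auto intro!: integral_spike simp: f'_def g'_def)
  moreover have "norm (integral {s..t} f') \<le> integral {s..t} g'"
  proof (rule integral_norm_bound_integral)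
    show "f' integrable_on {s..t}" "g' integrable_on {s..t}"
      using assms(1,2) \<open>negligible N\<close> by (auto intro: integrable_spike simp: f'_def g'_def)
    show "norm (f' r) \<le> g' r" if "r \<in> {s..t}" for r
      using N that by (auto simp: f'_def g'_def)
  qed
  ultimately show ?thesis
    by simp
qed

lemma AE_le_of_esssup_less:
  fixes f :: "'a \<Rightarrow> real"
  assumes "esssup M (\<lambda>x. ereal (f x)) < ereal T" "0 < T"
  obtains a where "0 \<le> a" "a < T" "AE x in M. f x \<le> a"
proof -
  have AE: "AE x in M. ereal (f x) \<le> esssup M (\<lambda>x. ereal (f x))"
    by (rule esssup_AE)
  show thesis
  proof (cases "esssup M (\<lambda>x. ereal (f x))")
    case (real r)
    with AE have "AE x in M. f x \<le> max 0 r"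
      by (auto elim: eventually_mono)
    with real assms show thesis
      by (intro that[of "max 0 r"]) auto
  next
    case MInf
    with AE have "AE x in M. f x \<le> 0"
      by (auto elim: eventually_mono)
    with assms(2) show thesis
      by (intro that[of 0]) auto
  qed (use assms(1) in simp)
qed

lemma damping_threshold_pos:
  fixes c \<rho> G :: real
  assumes "0 < c" "0 < \<rho>" "0 \<le> G"
  shows "0 < sqrt (c * \<rho> + c\<^sup>2 / 4 * G\<^sup>2) - c / 2 * G"
proof -
  have "sqrt (c\<^sup>2 / 4 * G\<^sup>2) = c / 2 * G"
    using assms by (intro real_sqrt_unique) (auto simp: power_mult_distrib power_divide)
  then have "c / 2 * G = sqrt (c\<^sup>2 / 4 * G\<^sup>2)"
    by simp
  also have "\<dots> < sqrt (c * \<rho> + c\<^sup>2 / 4 * G\<^sup>2)"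
    using assms by simp
  finally show ?thesis
    by simp
qed

lemma damping_margin:
  fixes a c \<rho> G :: real
  assumes "0 \<le> a" "0 < c" "0 \<le> G"
    and "a < sqrt (c * \<rho> + c\<^sup>2 / 4 * G\<^sup>2) - c / 2 * G"
  obtains \<kappa> where "\<kappa> > 0" "\<And>x y. 2 * a * x * y + a * G * x\<^sup>2 \<le> (\<rho> - \<kappa>) * x\<^sup>2 + (c - \<kappa>) * y\<^sup>2"
proof -
  have "0 \<le> a + c / 2 * G"
    using assms by simp
  then have "(a + c / 2 * G)\<^sup>2 < (sqrt (c * \<rho> + c\<^sup>2 / 4 * G\<^sup>2))\<^sup>2"
    using assms(4) by (intro power_strict_mono) auto
  also have "\<dots> = c * \<rho> + c\<^sup>2 / 4 * G\<^sup>2"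
  proof (rule real_sqrt_pow2)
    have "0 < sqrt (c * \<rho> + c\<^sup>2 / 4 * G\<^sup>2)"
      using \<open>0 \<le> a + c / 2 * G\<close> assms(4) by linarith
    then show "0 \<le> c * \<rho> + c\<^sup>2 / 4 * G\<^sup>2"
      by simp
  qed
  finally have "a\<^sup>2 < c * (\<rho> - a * G)"
    by (simp add: power2_eq_square algebra_simps)
  moreover have "0 < c * (\<rho> - a * G)"
    using calculation zero_le_power2[of a] by linarith
  then have "\<rho> - a * G > 0"
    using assms(2) by (rule zero_less_mult_pos)
  ultimately obtain \<kappa> where "\<kappa> > 0" and \<kappa>: "\<And>x y. 2 * a * x * y \<le> (\<rho> - a * G - \<kappa>) * x\<^sup>2 + (c - \<kappa>) * y\<^sup>2"
    using quadratic_form_margin[OF _ assms(2)] by blast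
  show thesis
  proof (rule that[OF \<open>\<kappa> > 0\<close>])
    fix x y :: real
    show "2 * a * x * y + a * G * x\<^sup>2 \<le> (\<rho> - \<kappa>) * x\<^sup>2 + (c - \<kappa>) * y\<^sup>2"
      using \<kappa>[of x y] by (simp add: algebra_simps)
  qed
qed

section \<open>Weak solutions and the energy inequality\<close>

text \<open>The equation is used only through \<open>weak_bound\<close>: \<open>S\<close> stands for \<open>B\<^sup>1\<^sup>/\<^sup>2\<close>, so that
  \<open>inner (S u) (S v)\<close> is the pairing of \<open>B u\<close> with \<open>v\<close>, and the forcing \<open>A(t) u\<close> enters only
  through an essential bound \<open>a\<close> of \<open>\<parallel>A(t)\<parallel>\<close>.\<close>

locale weak_damped_wave =
  fixes DS :: "'h::{real_inner,complete_space} set" and S :: "'h \<Rightarrow> 'h" and g :: "'h \<Rightarrow>\<^sub>L 'h"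
    and u u' :: "real \<Rightarrow> 'h" and a :: real
  assumes S_lin: "lin_op_on DS S"
    and u_in_DS: "\<And>t. 0 \<le> t \<Longrightarrow> u t \<in> DS"
    and Su_cont: "continuous_on {0..} (\<lambda>t. S (u t))"
    and u_deriv: "\<And>t. 0 \<le> t \<Longrightarrow> (u has_vector_derivative u' t) (at t within {0..})"
    and u'_cont: "continuous_on {0..} u'"
    and a_nonneg: "0 \<le> a"
    and weak_bound: "\<And>v s t. v \<in> DS \<Longrightarrow> 0 \<le> s \<Longrightarrow> s \<le> t \<Longrightarrow>
       \<bar>inner (u' t - u' s) v + integral {s..t} (\<lambda>r. inner (S (u r)) (S v) + inner (g (u' r)) v)\<bar>
         \<le> norm v * integral {s..t} (\<lambda>r. a * norm (u r))"
begin

lemma DS_subspace: "subspace DS"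
  using S_lin by (simp add: lin_op_on_def)

lemma S_scaleR: "x \<in> DS \<Longrightarrow> S (c *\<^sub>R x) = c *\<^sub>R S x"
  using S_lin by (simp add: lin_op_on_def)

lemma S_diff: "x \<in> DS \<Longrightarrow> y \<in> DS \<Longrightarrow> S (x - y) = S x - S y"
  using S_lin DS_subspace S_scaleR[of y "-1"]
  by (metis (no_types, lifting) lin_op_on_def diff_conv_add_uminus scaleR_minus1_left subspace_neg)

lemma u_cont: "continuous_on {0..} u"
  using u_deriv by (metis atLeast_iff continuous_on_eq_continuous_within has_vector_derivative_continuous)

lemma continuous_on_Icc_solution:
  assumes "0 \<le> s"
  shows "continuous_on {s..t} u" "continuous_on {s..t} (\<lambda>r. S (u r))" "continuous_on {s..t} u'"
  using continuous_on_Icc_of_atLeast[OF _ assms] u_cont Su_cont u'_cont by auto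

definition increment_error :: "(real \<Rightarrow> 'h) \<Rightarrow> (real \<Rightarrow> 'h) \<Rightarrow> real \<Rightarrow> real \<Rightarrow> real \<Rightarrow> real" where
  "increment_error w w' x y r = a * norm (u r) * norm (w r - w x) + norm (S (u r)) * norm (S (w r) - S (w x))
     + norm g * norm (u' r) * norm (w r - w x) + norm (u' y - u' r) * norm (w' r)"

lemma weak_bound_increment:
  fixes w w' :: "real \<Rightarrow> 'h"
  assumes "0 \<le> x" "x \<le> y"
    and w_in_DS: "\<And>r. r \<in> {x..y} \<Longrightarrow> w r \<in> DS"
    and Sw_cont: "continuous_on {x..y} (\<lambda>r. S (w r))"
    and w_deriv: "\<And>r. r \<in> {x..y} \<Longrightarrow> (w has_vector_derivative w' r) (at r within {x..y})"
    and w'_cont: "continuous_on {x..y} w'"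
  shows "\<bar>inner (u' y) (w y) - inner (u' x) (w x)
      + integral {x..y} (\<lambda>r. inner (S (u r)) (S (w r)) + inner (g (u' r)) (w r) - inner (u' r) (w' r))\<bar>
    \<le> integral {x..y} (\<lambda>r. a * norm (u r) * norm (w r)) + integral {x..y} (increment_error w w' x y)"
proof -
  have w_cont: "continuous_on {x..y} w"
    using w_deriv by (metis continuous_on_eq_continuous_within has_vector_derivative_continuous)
  note cont = w_cont Sw_cont w'_cont continuous_on_Icc_solution[OF \<open>0 \<le> x\<close>]
  define f where "f r = inner (S (u r)) (S (w r)) + inner (g (u' r)) (w r) - inner (u' r) (w' r)" for r
  \<comment> \<open>freeze the test vector at \<open>w x\<close>: \<open>weak_bound\<close> controls the frozen part, \<open>D\<close> the rest\<close>
  define f\<^sub>x where "f\<^sub>x r = inner (S (u r)) (S (w x)) + inner (g (u' r)) (w x)" for r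
  define D where "D r = inner (S (u r)) (S (w r) - S (w x)) + inner (g (u' r)) (w r - w x)
      + inner (u' y - u' r) (w' r)" for r
  define E where "E r = norm (S (u r)) * norm (S (w r) - S (w x))
      + norm g * norm (u' r) * norm (w r - w x) + norm (u' y - u' r) * norm (w' r)" for r
  have "((\<lambda>r. inner (u' y) (w' r)) has_integral inner (u' y) (w y) - inner (u' y) (w x)) {x..y}"
    using \<open>x \<le> y\<close> w_deriv
    by (intro fundamental_theorem_of_calculus bounded_linear.has_vector_derivative[OF bounded_linear_inner_right])
  then have "integral {x..y} D = integral {x..y} f - integral {x..y} f\<^sub>x + inner (u' y) (w y - w x)"
    unfolding D_def f_def f\<^sub>x_def using cont
    by (simp add: inner_diff_left inner_diff_right integral_add integral_diff integrable_continuous_real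
        continuous_intros integrable_add integrable_diff integral_unique)
  then have split: "inner (u' y) (w y) - inner (u' x) (w x) + integral {x..y} f
      = (inner (u' y - u' x) (w x) + integral {x..y} f\<^sub>x) + integral {x..y} D"
    by (simp add: inner_diff_left inner_diff_right)
  have "\<bar>inner (u' y - u' x) (w x) + integral {x..y} f\<^sub>x\<bar> \<le> norm (w x) * integral {x..y} (\<lambda>r. a * norm (u r))"
    unfolding f\<^sub>x_def using weak_bound[OF w_in_DS] assms(1,2) by simp
  also have "\<dots> = integral {x..y} (\<lambda>r. a * norm (u r) * norm (w x))"
    by (simp add: mult.commute)
  also have "\<dots> \<le> integral {x..y} (\<lambda>r. a * norm (u r) * norm (w r) + a * norm (u r) * norm (w r - w x))"
    using cont a_nonneg norm_triangle_sub[of "w x" "w r" for r]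
    by (intro integral_le integrable_continuous_real continuous_intros)
      (auto simp: norm_minus_commute distrib_left[symmetric] intro!: mult_left_mono)
  finally have bound1: "\<bar>inner (u' y - u' x) (w x) + integral {x..y} f\<^sub>x\<bar>
      \<le> integral {x..y} (\<lambda>r. a * norm (u r) * norm (w r) + a * norm (u r) * norm (w r - w x))" .
  have "norm (integral {x..y} D) \<le> integral {x..y} E"
  proof (rule integral_norm_bound_integral)
    show "D integrable_on {x..y}" "E integrable_on {x..y}"
      unfolding D_def E_def using cont by (auto intro!: integrable_continuous_real continuous_intros)
    fix r
    have "\<bar>inner (g (u' r)) (w r - w x)\<bar> \<le> norm (g (u' r)) * norm (w r - w x)"
      by (rule Cauchy_Schwarz_ineq2)
    also have "\<dots> \<le> norm g * norm (u' r) * norm (w r - w x)"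
      by (intro mult_right_mono norm_blinfun) simp
    finally show "norm (D r) \<le> E r"
      unfolding D_def E_def real_norm_def
      using Cauchy_Schwarz_ineq2[of "S (u r)" "S (w r) - S (w x)"] Cauchy_Schwarz_ineq2[of "u' y - u' r" "w' r"]
      by linarith
  qed
  with split bound1 show ?thesis
    unfolding f_def[symmetric] E_def increment_error_def using cont
    by (simp add: integral_add integrable_continuous_real continuous_intros add.assoc)
qed


lemma increment_error_small:
  fixes w w' :: "real \<Rightarrow> 'h"
  assumes "0 \<le> s" "e > 0"
    and Sw_cont: "continuous_on {s..t} (\<lambda>r. S (w r))"
    and w_cont: "continuous_on {s..t} w" and w'_cont: "continuous_on {s..t} w'"
  obtains d where "d > 0" "\<And>x y r. s \<le> x \<Longrightarrow> x \<le> r \<Longrightarrow> r \<le> y \<Longrightarrow> y \<le> t \<Longrightarrow> y - x < d \<Longrightarrow>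
      increment_error w w' x y r \<le> e"
proof -
  obtain B\<^sub>1 where "B\<^sub>1 > 0" "\<And>r. r \<in> {s..t} \<Longrightarrow> norm (u r) \<le> B\<^sub>1"
    using continuous_on_Icc_bounded[OF continuous_on_Icc_solution(1)[OF \<open>0 \<le> s\<close>, of t]] by blast
  obtain B\<^sub>2 where "B\<^sub>2 > 0" "\<And>r. r \<in> {s..t} \<Longrightarrow> norm (S (u r)) \<le> B\<^sub>2"
    using continuous_on_Icc_bounded[OF continuous_on_Icc_solution(2)[OF \<open>0 \<le> s\<close>, of t]] by blast
  obtain B\<^sub>3 where "B\<^sub>3 > 0" "\<And>r. r \<in> {s..t} \<Longrightarrow> norm (u' r) \<le> B\<^sub>3"
    using continuous_on_Icc_bounded[OF continuous_on_Icc_solution(3)[OF \<open>0 \<le> s\<close>, of t]] by blast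
  obtain B\<^sub>4 where "B\<^sub>4 > 0" "\<And>r. r \<in> {s..t} \<Longrightarrow> norm (w' r) \<le> B\<^sub>4"
    using continuous_on_Icc_bounded[OF w'_cont] by blast
  note B = \<open>B\<^sub>1 > 0\<close> \<open>B\<^sub>2 > 0\<close> \<open>B\<^sub>3 > 0\<close> \<open>B\<^sub>4 > 0\<close>
  note bounds = \<open>\<And>r. r \<in> {s..t} \<Longrightarrow> norm (u r) \<le> B\<^sub>1\<close> \<open>\<And>r. r \<in> {s..t} \<Longrightarrow> norm (S (u r)) \<le> B\<^sub>2\<close>
    \<open>\<And>r. r \<in> {s..t} \<Longrightarrow> norm (u' r) \<le> B\<^sub>3\<close> \<open>\<And>r. r \<in> {s..t} \<Longrightarrow> norm (w' r) \<le> B\<^sub>4\<close>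
  define C where "C = a * B\<^sub>1 + B\<^sub>2 + norm g * B\<^sub>3 + B\<^sub>4"
  have "C > 0"
    using B a_nonneg by (simp add: C_def add_nonneg_pos)
  \<comment> \<open>one modulus of uniform continuity serves \<open>w\<close>, \<open>S \<circ> w\<close> and \<open>u'\<close> at once\<close>
  define Z where "Z r = (w r, S (w r), u' r)" for r
  have "continuous_on {s..t} Z"
    unfolding Z_def using continuous_on_Icc_solution(3)[OF \<open>0 \<le> s\<close>] Sw_cont w_cont
    by (intro continuous_intros)
  then obtain d where "d > 0" and d: "\<And>x y. x \<in> {s..t} \<Longrightarrow> y \<in> {s..t} \<Longrightarrow> \<bar>y - x\<bar> < d \<Longrightarrow> norm (Z y - Z x) < e / C"
    using continuous_on_Icc_uniformly[OF _ divide_pos_pos[OF \<open>e > 0\<close> \<open>C > 0\<close>]] by blast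
  have "increment_error w w' x y r \<le> e"
    if "s \<le> x" "x \<le> r" "r \<le> y" "y \<le> t" "y - x < d" for x y r
  proof -
    have near: "norm (Z r - Z x) \<le> e / C" "norm (Z y - Z r) \<le> e / C"
      using d[of x r] d[of r y] that by auto
    moreover have "norm (w r - w x) \<le> norm (Z r - Z x)" "norm (S (w r) - S (w x)) \<le> norm (Z r - Z x)"
        "norm (u' y - u' r) \<le> norm (Z y - Z r)"
      unfolding Z_def using norm_fst_le order_trans[OF norm_fst_le norm_snd_le]
        order_trans[OF norm_snd_le norm_snd_le] by simp_all
    ultimately have "norm (w r - w x) \<le> e / C" "norm (S (w r) - S (w x)) \<le> e / C" "norm (u' y - u' r) \<le> e / C"
      by linarith+
    moreover have "norm (u r) \<le> B\<^sub>1" "norm (S (u r)) \<le> B\<^sub>2" "norm (u' r) \<le> B\<^sub>3" "norm (w' r) \<le> B\<^sub>4"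
      using bounds[of r] that by auto
    ultimately have "increment_error w w' x y r \<le> a * B\<^sub>1 * (e / C) + B\<^sub>2 * (e / C) + norm g * B\<^sub>3 * (e / C) + (e / C) * B\<^sub>4"
      unfolding increment_error_def using a_nonneg B \<open>e > 0\<close> \<open>C > 0\<close>
      by (intro add_mono mult_mono mult_left_mono) auto
    also have "\<dots> = (a * B\<^sub>1 + B\<^sub>2 + norm g * B\<^sub>3 + B\<^sub>4) * (e / C)"
      by (simp add: algebra_simps)
    also have "\<dots> = e"
      using \<open>C > 0\<close> by (simp add: C_def[symmetric])
    finally show ?thesis .
  qed
  with \<open>d > 0\<close> show thesis
    by (rule that)
qed

lemma weak_bound_short_increment:
  fixes w w' :: "real \<Rightarrow> 'h"
  assumes "0 \<le> s" "e > 0"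
    and w_in_DS: "\<And>r. r \<in> {s..t} \<Longrightarrow> w r \<in> DS"
    and Sw_cont: "continuous_on {s..t} (\<lambda>r. S (w r))"
    and w_deriv: "\<And>r. r \<in> {s..t} \<Longrightarrow> (w has_vector_derivative w' r) (at r within {s..t})"
    and w'_cont: "continuous_on {s..t} w'"
  obtains d where "d > 0" "\<And>x y. s \<le> x \<Longrightarrow> x \<le> y \<Longrightarrow> y \<le> t \<Longrightarrow> y - x < d \<Longrightarrow>
      \<bar>inner (u' y) (w y) - inner (u' x) (w x)
        + integral {x..y} (\<lambda>r. inner (S (u r)) (S (w r)) + inner (g (u' r)) (w r) - inner (u' r) (w' r))\<bar>
      \<le> integral {x..y} (\<lambda>r. a * norm (u r) * norm (w r)) + e * (y - x)"
proof -
  have w_cont: "continuous_on {s..t} w"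
    using w_deriv by (metis continuous_on_eq_continuous_within has_vector_derivative_continuous)
  obtain d where "d > 0" and d: "\<And>x y r. s \<le> x \<Longrightarrow> x \<le> r \<Longrightarrow> r \<le> y \<Longrightarrow> y \<le> t \<Longrightarrow> y - x < d \<Longrightarrow>
      increment_error w w' x y r \<le> e"
    using increment_error_small[OF \<open>0 \<le> s\<close> \<open>e > 0\<close> Sw_cont w_cont w'_cont] by blast
  show thesis
  proof (rule that[OF \<open>d > 0\<close>])
    fix x y
    assume xy: "s \<le> x" "x \<le> y" "y \<le> t" "y - x < d"
    have "integral {x..y} (increment_error w w' x y) \<le> integral {x..y} (\<lambda>r. e)"
      unfolding increment_error_def
      using xy d w_cont Sw_cont w'_cont continuous_on_Icc_solution[of x y] \<open>0 \<le> s\<close>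
      by (intro integral_le integrable_continuous_real continuous_intros)
        (auto elim!: continuous_on_subset simp: increment_error_def)
    moreover have "\<bar>inner (u' y) (w y) - inner (u' x) (w x)
        + integral {x..y} (\<lambda>r. inner (S (u r)) (S (w r)) + inner (g (u' r)) (w r) - inner (u' r) (w' r))\<bar>
      \<le> integral {x..y} (\<lambda>r. a * norm (u r) * norm (w r)) + integral {x..y} (increment_error w w' x y)"
      using xy assms
      by (intro weak_bound_increment)
        (auto intro: w_in_DS has_vector_derivative_within_subset[OF w_deriv] elim!: continuous_on_subset)
    ultimately show "\<bar>inner (u' y) (w y) - inner (u' x) (w x)
        + integral {x..y} (\<lambda>r. inner (S (u r)) (S (w r)) + inner (g (u' r)) (w r) - inner (u' r) (w' r))\<bar>
      \<le> integral {x..y} (\<lambda>r. a * norm (u r) * norm (w r)) + e * (y - x)"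
      using xy by (simp add: mult.commute)
  qed
qed

text \<open>Since \<open>t \<mapsto> inner (u' t) (w t)\<close> need not be differentiable, the product rule is obtained
  by comparing increments on short intervals.\<close>

lemma weak_bound_along_path:
  fixes w w' :: "real \<Rightarrow> 'h"
  assumes "0 \<le> s" "s \<le> t"
    and w_in_DS: "\<And>r. r \<in> {s..t} \<Longrightarrow> w r \<in> DS"
    and Sw_cont: "continuous_on {s..t} (\<lambda>r. S (w r))"
    and w_deriv: "\<And>r. r \<in> {s..t} \<Longrightarrow> (w has_vector_derivative w' r) (at r within {s..t})"
    and w'_cont: "continuous_on {s..t} w'"
  shows "\<bar>inner (u' t) (w t) - inner (u' s) (w s)
      + integral {s..t} (\<lambda>r. inner (S (u r)) (S (w r)) + inner (g (u' r)) (w r) - inner (u' r) (w' r))\<bar>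
    \<le> integral {s..t} (\<lambda>r. a * norm (u r) * norm (w r))"
proof -
  define f where "f r = inner (S (u r)) (S (w r)) + inner (g (u' r)) (w r) - inner (u' r) (w' r)" for r
  define h where "h r = a * norm (u r) * norm (w r)" for r
  define \<Phi> where "\<Phi> \<tau> = inner (u' \<tau>) (w \<tau>) + integral {s..\<tau>} f" for \<tau>
  define \<Psi> where "\<Psi> \<tau> = integral {s..\<tau>} h" for \<tau>
  have w_cont: "continuous_on {s..t} w"
    using w_deriv by (metis continuous_on_eq_continuous_within has_vector_derivative_continuous)
  have "continuous_on {s..t} f" "continuous_on {s..t} h"
    unfolding f_def h_def using w_cont Sw_cont w'_cont continuous_on_Icc_solution[OF \<open>0 \<le> s\<close>]
    by (auto intro!: continuous_intros)
  then have "f integrable_on {s..t}" "h integrable_on {s..t}"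
    by (auto intro: integrable_continuous_real)
  have combine: "integral {s..y} k = integral {s..x} k + integral {x..y} k"
    if "k integrable_on {s..t}" "s \<le> x" "x \<le> y" "y \<le> t" for k :: "real \<Rightarrow> real" and x y
  proof -
    have "k integrable_on {s..y}"
      using that(1) by (rule integrable_subinterval_real) (use that in auto)
    with that show ?thesis
      using Henstock_Kurzweil_Integration.integral_combine[of s x y k] by simp
  qed
  have increments: "\<Phi> y - \<Phi> x = inner (u' y) (w y) - inner (u' x) (w x) + integral {x..y} f"
      "\<Psi> y - \<Psi> x = integral {x..y} h"
    if "s \<le> x" "x \<le> y" "y \<le> t" for x y
    using combine[OF \<open>f integrable_on {s..t}\<close> that] combine[OF \<open>h integrable_on {s..t}\<close> that]
    by (simp_all add: \<Phi>_def \<Psi>_def)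
  have local: "\<exists>d>0. \<forall>x y. s \<le> x \<longrightarrow> x \<le> y \<longrightarrow> y \<le> t \<longrightarrow> y - x < d \<longrightarrow>
      \<bar>\<Phi> y - \<Phi> x\<bar> \<le> \<Psi> y - \<Psi> x + e * (y - x)" if "e > 0" for e
  proof -
    obtain d where "d > 0" and d: "\<And>x y. s \<le> x \<Longrightarrow> x \<le> y \<Longrightarrow> y \<le> t \<Longrightarrow> y - x < d \<Longrightarrow>
        \<bar>inner (u' y) (w y) - inner (u' x) (w x) + integral {x..y} f\<bar> \<le> integral {x..y} h + e * (y - x)"
      using weak_bound_short_increment[OF \<open>0 \<le> s\<close> \<open>e > 0\<close> w_in_DS Sw_cont w_deriv w'_cont]
      unfolding f_def h_def by blast
    with \<open>d > 0\<close> show ?thesis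
      by (auto simp: increments)
  qed
  have "\<Phi> t - \<Phi> s \<le> \<Psi> t - \<Psi> s" "(- \<Phi> t) - (- \<Phi> s) \<le> \<Psi> t - \<Psi> s"
    by (rule increment_le_of_local_increment_le[OF \<open>s \<le> t\<close>]; use local in \<open>fastforce simp: abs_le_iff\<close>)+
  then show ?thesis
    using increments[of s t] \<open>s \<le> t\<close> unfolding f_def h_def by (simp add: abs_le_iff)
qed

lemma shifted_has_vector_derivative:
  assumes "\<And>r. r \<in> {s..t} \<Longrightarrow> 0 \<le> r + c" "r \<in> {s..t}"
  shows "((\<lambda>r. u (r + c)) has_vector_derivative u' (r + c)) (at r within {s..t})"
proof -
  have "(u has_vector_derivative u' (r + c)) (at (r + c) within (\<lambda>r. r + c) ` {s..t})"
    using assms by (intro has_vector_derivative_within_subset[OF u_deriv]) auto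
  moreover have "((\<lambda>r. r + c) has_vector_derivative 1) (at r within {s..t})"
    by (auto intro!: derivative_eq_intros)
  ultimately show ?thesis
    using vector_diff_chain_within by (force simp: o_def)
qed

lemma central_quotient_test_path:
  assumes "0 < h" "h \<le> s" "s \<le> t"
  shows "\<And>r. r \<in> {s..t} \<Longrightarrow> central_quotient u h r \<in> DS"
    and "\<And>r. r \<in> {s..t} \<Longrightarrow> S (central_quotient u h r) = central_quotient (\<lambda>r. S (u r)) h r"
    and "continuous_on {s..t} (central_quotient u h)"
    and "continuous_on {s..t} (central_quotient u' h)"
    and "continuous_on {s..t} (central_quotient (\<lambda>r. S (u r)) h)"
    and "\<And>r. r \<in> {s..t} \<Longrightarrow>
      (central_quotient u h has_vector_derivative central_quotient u' h r) (at r within {s..t})"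
proof -
  fix r
  assume "r \<in> {s..t}"
  then have "u (r + h) \<in> DS" "u (r - h) \<in> DS"
    using assms by (auto intro!: u_in_DS)
  then show "central_quotient u h r \<in> DS" "S (central_quotient u h r) = central_quotient (\<lambda>r. S (u r)) h r"
    using DS_subspace by (simp_all add: central_quotient_def subspace_diff subspace_scale S_scaleR S_diff)
  have "((\<lambda>r. u (r + h) - u (r + - h)) has_vector_derivative u' (r + h) - u' (r + - h)) (at r within {s..t})"
    using assms \<open>r \<in> {s..t}\<close> by (intro has_vector_derivative_diff shifted_has_vector_derivative) auto
  then show "(central_quotient u h has_vector_derivative central_quotient u' h r) (at r within {s..t})"
    unfolding central_quotient_def[abs_def]
    by (auto dest: bounded_linear.has_vector_derivative[OF bounded_linear_scaleR_right])
next
  show "continuous_on {s..t} (central_quotient u h)" "continuous_on {s..t} (central_quotient u' h)"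
    "continuous_on {s..t} (central_quotient (\<lambda>r. S (u r)) h)"
    unfolding central_quotient_def using assms
    by (intro continuous_intros continuous_on_compose2[OF u_cont] continuous_on_compose2[OF u'_cont]
        continuous_on_compose2[OF Su_cont]; force)+
qed

lemma central_quotient_weak_bound:
  assumes "0 < h" "h \<le> s" "s \<le> t"
  shows "\<bar>inner (u' t) (central_quotient u h t) - inner (u' s) (central_quotient u h s)
      + (integral {s..t} (\<lambda>r. inner (S (u r)) (central_quotient (\<lambda>r. S (u r)) h r))
        + integral {s..t} (\<lambda>r. inner (g (u' r)) (central_quotient u h r))
        - integral {s..t} (\<lambda>r. inner (u' r) (central_quotient u' h r)))\<bar>
    \<le> integral {s..t} (\<lambda>r. a * norm (u r) * norm (central_quotient u h r))"
proof -
  note path = central_quotient_test_path[OF assms]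
  have "0 \<le> s"
    using assms by simp
  note cont = path(3-5) continuous_on_Icc_solution[OF \<open>0 \<le> s\<close>, of t]
  have "continuous_on {s..t} (\<lambda>r. S (central_quotient u h r))"
    using path(5) by (rule continuous_on_eq) (simp add: path(2))
  note bound = weak_bound_along_path[OF \<open>0 \<le> s\<close> \<open>s \<le> t\<close> path(1) this path(6,4)]
  have "integral {s..t} (\<lambda>r. inner (S (u r)) (S (central_quotient u h r)) + inner (g (u' r)) (central_quotient u h r)
        - inner (u' r) (central_quotient u' h r))
      = integral {s..t} (\<lambda>r. inner (S (u r)) (central_quotient (\<lambda>r. S (u r)) h r)
        + inner (g (u' r)) (central_quotient u h r) - inner (u' r) (central_quotient u' h r))"
    by (rule integral_cong) (simp add: path(2))
  also have "\<dots> = integral {s..t} (\<lambda>r. inner (S (u r)) (central_quotient (\<lambda>r. S (u r)) h r))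
        + integral {s..t} (\<lambda>r. inner (g (u' r)) (central_quotient u h r))
        - integral {s..t} (\<lambda>r. inner (u' r) (central_quotient u' h r))"
    using cont
    by (simp add: integral_add integral_diff integrable_add integrable_continuous_real continuous_intros)
  finally show ?thesis
    using bound by simp
qed

lemma integral_inner_central_quotient_tendsto:
  assumes "0 < s" "s \<le> t" "continuous_on {s..t} \<psi>"
  shows "((\<lambda>h. integral {s..t} (\<lambda>r. inner (\<psi> r) (central_quotient u h r)))
      \<longlongrightarrow> integral {s..t} (\<lambda>r. inner (\<psi> r) (u' r))) (at_right 0)"
proof (rule integral_tendsto_of_uniform_limit[OF \<open>s \<le> t\<close>])
  have "bounded (u' ` {s..t})" "bounded (\<psi> ` {s..t})"
    using assms continuous_on_Icc_solution(3)[of s t]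
    by (auto intro!: compact_imp_bounded compact_continuous_image)
  then show "uniform_limit {s..t} (\<lambda>h r. inner (\<psi> r) (central_quotient u h r)) (\<lambda>r. inner (\<psi> r) (u' r)) (at_right 0)"
    by (intro uniform_limit_intros central_quotient_uniform_limit[OF u_deriv u'_cont \<open>0 < s\<close>]) auto
  show "\<forall>\<^sub>F h in at_right 0. (\<lambda>r. inner (\<psi> r) (central_quotient u h r)) integrable_on {s..t}"
    using eventually_at_right_real[OF \<open>0 < s\<close>] by (rule eventually_mono)
      (use central_quotient_test_path(3) assms in \<open>auto intro!: integrable_continuous_real continuous_intros\<close>)
  show "(\<lambda>r. inner (\<psi> r) (u' r)) integrable_on {s..t}"
    using assms continuous_on_Icc_solution(3)[of s t]
    by (auto intro!: integrable_continuous_real continuous_intros)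
qed

lemma integral_norm_central_quotient_tendsto:
  assumes "0 < s" "s \<le> t" "continuous_on {s..t} \<psi>"
  shows "((\<lambda>h. integral {s..t} (\<lambda>r. \<psi> r * norm (central_quotient u h r)))
      \<longlongrightarrow> integral {s..t} (\<lambda>r. \<psi> r * norm (u' r))) (at_right 0)"
proof (rule integral_tendsto_of_uniform_limit[OF \<open>s \<le> t\<close>])
  have "bounded ((\<lambda>r. norm (u' r)) ` {s..t})" "bounded (\<psi> ` {s..t})"
    using assms continuous_on_Icc_solution(3)[of s t]
    by (auto intro!: compact_imp_bounded compact_continuous_image continuous_intros)
  then show "uniform_limit {s..t} (\<lambda>h r. \<psi> r * norm (central_quotient u h r)) (\<lambda>r. \<psi> r * norm (u' r)) (at_right 0)"
    by (intro uniform_limit_intros central_quotient_uniform_limit[OF u_deriv u'_cont \<open>0 < s\<close>]) auto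
  show "\<forall>\<^sub>F h in at_right 0. (\<lambda>r. \<psi> r * norm (central_quotient u h r)) integrable_on {s..t}"
    using eventually_at_right_real[OF \<open>0 < s\<close>] by (rule eventually_mono)
      (use central_quotient_test_path(3) assms in \<open>auto intro!: integrable_continuous_real continuous_intros\<close>)
  show "(\<lambda>r. \<psi> r * norm (u' r)) integrable_on {s..t}"
    using assms continuous_on_Icc_solution(3)[of s t]
    by (auto intro!: integrable_continuous_real continuous_intros)
qed

text \<open>As \<open>u'\<close> has no derivative it cannot itself be a test path; its central difference quotients
  can, and they converge to \<open>u'\<close> uniformly.\<close>

lemma energy_inequality:
  assumes "0 < s" "s \<le> t"
  shows "\<bar>((norm (S (u t)))\<^sup>2 + (norm (u' t))\<^sup>2 - ((norm (S (u s)))\<^sup>2 + (norm (u' s))\<^sup>2)) / 2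
      + integral {s..t} (\<lambda>r. inner (g (u' r)) (u' r))\<bar>
    \<le> integral {s..t} (\<lambda>r. a * norm (u r) * norm (u' r))"
proof -
  have "0 \<le> s"
    using assms by simp
  note cont = continuous_on_Icc_solution[OF \<open>0 \<le> s\<close>, of t]
  have cq: "uniform_limit {s..t} (central_quotient u) u' (at_right 0)"
    by (rule central_quotient_uniform_limit[OF u_deriv u'_cont \<open>0 < s\<close>])
  have endpoints: "((\<lambda>h. inner (u' x) (central_quotient u h x)) \<longlongrightarrow> inner (u' x) (u' x)) (at_right 0)"
    if "x \<in> {s..t}" for x
    using tendsto_uniform_limitI[OF cq that] by (intro tendsto_intros)
  have damping: "((\<lambda>h. integral {s..t} (\<lambda>r. inner (g (u' r)) (central_quotient u h r)))
      \<longlongrightarrow> integral {s..t} (\<lambda>r. inner (g (u' r)) (u' r))) (at_right 0)"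
    using cont assms by (intro integral_inner_central_quotient_tendsto continuous_intros)
  have forcing: "((\<lambda>h. integral {s..t} (\<lambda>r. a * norm (u r) * norm (central_quotient u h r)))
      \<longlongrightarrow> integral {s..t} (\<lambda>r. a * norm (u r) * norm (u' r))) (at_right 0)"
    using cont assms by (intro integral_norm_central_quotient_tendsto continuous_intros)
  define X\<^sub>0 where "X\<^sub>0 = inner (u' t) (u' t) - inner (u' s) (u' s)
      + (((norm (S (u t)))\<^sup>2 - (norm (S (u s)))\<^sup>2) / 2 + integral {s..t} (\<lambda>r. inner (g (u' r)) (u' r))
        - ((norm (u' t))\<^sup>2 - (norm (u' s))\<^sup>2) / 2)"
  have "((\<lambda>h. inner (u' t) (central_quotient u h t) - inner (u' s) (central_quotient u h s)
      + (integral {s..t} (\<lambda>r. inner (S (u r)) (central_quotient (\<lambda>r. S (u r)) h r))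
        + integral {s..t} (\<lambda>r. inner (g (u' r)) (central_quotient u h r))
        - integral {s..t} (\<lambda>r. inner (u' r) (central_quotient u' h r)))) \<longlongrightarrow> X\<^sub>0) (at_right 0)"
    unfolding X\<^sub>0_def using assms
    by (intro tendsto_intros endpoints damping integral_inner_self_central_quotient_tendsto Su_cont u'_cont) auto
  then have "\<bar>X\<^sub>0\<bar> \<le> integral {s..t} (\<lambda>r. a * norm (u r) * norm (u' r))"
    using eventually_at_right_real[OF \<open>0 < s\<close>] assms
    by (intro tendsto_le[OF trivial_limit_at_right_real forcing tendsto_rabs])
      (auto elim!: eventually_mono intro: central_quotient_weak_bound)
  moreover have "X\<^sub>0 = ((norm (S (u t)))\<^sup>2 + (norm (u' t))\<^sup>2 - ((norm (S (u s)))\<^sup>2 + (norm (u' s))\<^sup>2)) / 2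
      + integral {s..t} (\<lambda>r. inner (g (u' r)) (u' r))"
    unfolding X\<^sub>0_def by (simp add: power2_norm_eq_inner[symmetric] field_simps)
  ultimately show ?thesis
    by simp
qed

end

section \<open>Exponential decay\<close>

locale damped_wave_decay = weak_damped_wave +
  fixes K c \<rho> \<eta> \<kappa> :: real
  assumes g_DS: "\<And>v. v \<in> DS \<Longrightarrow> g v \<in> DS"
    and S_g_bound: "\<And>v. v \<in> DS \<Longrightarrow> norm (S (g v)) \<le> K * norm (S v)"
    and g_coercive: "\<And>v. c * (norm v)\<^sup>2 \<le> inner (g v) v"
    and S_g_coercive: "\<And>v. v \<in> DS \<Longrightarrow> \<rho> * (norm v)\<^sup>2 + \<eta> * (norm (S v))\<^sup>2 \<le> inner (S v) (S (g v))"
    and rho_pos: "0 < \<rho>" and eta_pos: "0 < \<eta>" and kappa_pos: "0 < \<kappa>"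
    and margin: "\<And>x y. 2 * a * x * y + a * norm g * x\<^sup>2 \<le> (\<rho> - \<kappa>) * x\<^sup>2 + (c - \<kappa>) * y\<^sup>2"
begin

lemma S_g_u_cont: "continuous_on {0..} (\<lambda>r. S (g (u r)))"
  unfolding continuous_on_def
proof
  fix x :: real
  assume "x \<in> {0..}"
  have bound: "norm (S (g (u r)) - S (g (u x))) \<le> \<bar>K\<bar> * norm (S (u r) - S (u x))" if "r \<in> {0..}" for r
  proof -
    have "u r \<in> DS" "u x \<in> DS" "u r - u x \<in> DS"
      using that \<open>x \<in> {0..}\<close> u_in_DS DS_subspace by (auto intro: subspace_diff)
    then have "norm (S (g (u r)) - S (g (u x))) = norm (S (g (u r - u x)))"
      using g_DS by (simp add: S_diff blinfun.diff_right)
    also have "\<dots> \<le> K * norm (S (u r - u x))"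
      using S_g_bound \<open>u r - u x \<in> DS\<close> .
    also have "\<dots> \<le> \<bar>K\<bar> * norm (S (u r) - S (u x))"
      using \<open>u r \<in> DS\<close> \<open>u x \<in> DS\<close> by (simp add: S_diff mult_right_mono)
    finally show ?thesis .
  qed
  have "((\<lambda>r. S (u r)) \<longlongrightarrow> S (u x)) (at x within {0..})"
    using Su_cont \<open>x \<in> {0..}\<close> unfolding continuous_on_def by blast
  then have "((\<lambda>r. \<bar>K\<bar> * norm (S (u r) - S (u x))) \<longlongrightarrow> 0) (at x within {0..})"
    by (intro tendsto_mult_right_zero tendsto_norm_zero LIM_zero)
  moreover have "\<forall>\<^sub>F r in at x within {0..}. norm (S (g (u r)) - S (g (u x))) \<le> \<bar>K\<bar> * norm (S (u r) - S (u x))"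
    unfolding eventually_at_filter by (rule always_eventually) (simp add: bound)
  ultimately have "((\<lambda>r. S (g (u r)) - S (g (u x))) \<longlongrightarrow> 0) (at x within {0..})"
    by (rule Lim_null_comparison[rotated])
  then show "((\<lambda>r. S (g (u r))) \<longlongrightarrow> S (g (u x))) (at x within {0..})"
    by (rule LIM_zero_cancel)
qed

lemma weak_bound_along_g_u:
  assumes "0 \<le> s" "s \<le> t"
  shows "\<bar>inner (u' t) (g (u t)) - inner (u' s) (g (u s))
      + integral {s..t} (\<lambda>r. inner (S (u r)) (S (g (u r))) + inner (g (u' r)) (g (u r)) - inner (u' r) (g (u' r)))\<bar>
    \<le> integral {s..t} (\<lambda>r. a * norm (u r) * norm (g (u r)))"
proof (rule weak_bound_along_path[OF assms])
  show "continuous_on {s..t} (\<lambda>r. S (g (u r)))"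
    using S_g_u_cont assms(1) by (rule continuous_on_Icc_of_atLeast)
  show "((\<lambda>r. g (u r)) has_vector_derivative g (u' r)) (at r within {s..t})" if "r \<in> {s..t}" for r
    using that assms by (intro bounded_linear.has_vector_derivative[OF blinfun.bounded_linear_right]
        has_vector_derivative_within_subset[OF u_deriv]) auto
  show "continuous_on {s..t} (\<lambda>r. g (u' r))"
    using continuous_on_Icc_solution(3)[OF assms(1)] by (intro continuous_intros)
qed (use assms in \<open>auto intro!: g_DS u_in_DS\<close>)

lemma norm_g_u_increment:
  assumes "0 \<le> s" "s \<le> t"
  shows "(norm (g (u t)))\<^sup>2 - (norm (g (u s)))\<^sup>2 = 2 * integral {s..t} (\<lambda>r. inner (g (u' r)) (g (u r)))"
proof -
  have "((\<lambda>r. 2 * inner (g (u' r)) (g (u r))) has_integral inner (g (u t)) (g (u t)) - inner (g (u s)) (g (u s))) {s..t}"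
  proof (rule fundamental_theorem_of_calculus[OF \<open>s \<le> t\<close>])
    fix r
    assume "r \<in> {s..t}"
    with assms have "((\<lambda>r. g (u r)) has_vector_derivative g (u' r)) (at r within {s..t})"
      by (intro bounded_linear.has_vector_derivative[OF blinfun.bounded_linear_right]
          has_vector_derivative_within_subset[OF u_deriv]) auto
    from bounded_bilinear.has_vector_derivative[OF bounded_bilinear_inner this this]
    show "((\<lambda>r. inner (g (u r)) (g (u r))) has_vector_derivative 2 * inner (g (u' r)) (g (u r))) (at r within {s..t})"
      by (simp add: inner_commute)
  qed
  then have "integral {s..t} (\<lambda>r. 2 * inner (g (u' r)) (g (u r)))
      = inner (g (u t)) (g (u t)) - inner (g (u s)) (g (u s))"
    by (rule integral_unique)
  then show ?thesis
    by (simp add: power2_norm_eq_inner)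
qed

text \<open>The cross term \<open>inner (u' r) (g (u r))\<close> lets the damping control \<open>\<parallel>u\<parallel>\<close> as well as \<open>u'\<close>.\<close>

definition lyapunov :: "real \<Rightarrow> real" where
  "lyapunov r = (norm (S (u r)))\<^sup>2 + (norm (u' r))\<^sup>2 + inner (u' r) (g (u r)) + (norm (g (u r)))\<^sup>2 / 2"

definition decay_rate :: real where
  "decay_rate = min \<kappa> \<eta> / (1 + norm g + (norm g)\<^sup>2)"

lemma decay_rate_pos: "0 < decay_rate"
  using kappa_pos eta_pos by (simp add: decay_rate_def add_pos_nonneg)

lemma lyapunov_sum_of_squares:
  "lyapunov r = (norm (S (u r)))\<^sup>2 + (norm (u' r + (1/2) *\<^sub>R g (u r)))\<^sup>2 + (norm ((1/2) *\<^sub>R g (u r)))\<^sup>2"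
  unfolding lyapunov_def
  by (simp add: power_divide power2_norm_eq_inner inner_add_left inner_add_right inner_commute algebra_simps)

lemma lyapunov_nonneg: "0 \<le> lyapunov r"
  unfolding lyapunov_sum_of_squares by simp

lemma energy_le_lyapunov: "(norm (S (u r)))\<^sup>2 + (norm (u' r))\<^sup>2 \<le> 2 * lyapunov r"
proof -
  define p where "p = u' r + (1/2) *\<^sub>R g (u r)"
  define q where "q = (1/2) *\<^sub>R g (u r)"
  have "(norm (p - q))\<^sup>2 + (norm (p + q))\<^sup>2 = 2 * (norm p)\<^sup>2 + 2 * (norm q)\<^sup>2"
    by (simp add: power2_norm_eq_inner inner_add_left inner_add_right inner_diff_left inner_diff_right inner_commute)
  moreover have "u' r = p - q"
    by (simp add: p_def q_def)
  ultimately have "(norm (u' r))\<^sup>2 \<le> 2 * (norm p)\<^sup>2 + 2 * (norm q)\<^sup>2"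
    using zero_le_power2[of "norm (p + q)"] by (simp only:)
  moreover have "lyapunov r = (norm (S (u r)))\<^sup>2 + (norm p)\<^sup>2 + (norm q)\<^sup>2"
    unfolding lyapunov_sum_of_squares p_def q_def ..
  ultimately show ?thesis
    using zero_le_power2[of "norm (S (u r))"] by linarith
qed

lemma lyapunov_le:
  "lyapunov r \<le> (1 + norm g + (norm g)\<^sup>2) * ((norm (u r))\<^sup>2 + (norm (u' r))\<^sup>2 + (norm (S (u r)))\<^sup>2)"
proof -
  define x y z G where "x = norm (u r)" "y = norm (u' r)" "z = norm (S (u r))" "G = norm g"
  have "0 \<le> x" "0 \<le> y" "0 \<le> G"
    by (simp_all add: x_y_z_G_def)
  have "norm (g (u r)) \<le> G * x"
    unfolding x_y_z_G_def by (rule norm_blinfun)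
  have "inner (u' r) (g (u r)) \<le> y * norm (g (u r))"
    unfolding x_y_z_G_def by (rule norm_cauchy_schwarz)
  also have "\<dots> \<le> y * (G * x)"
    using \<open>norm (g (u r)) \<le> G * x\<close> \<open>0 \<le> y\<close> by (rule mult_left_mono)
  finally have "inner (u' r) (g (u r)) \<le> G * (x * y)"
    by (simp add: algebra_simps)
  moreover have "(norm (g (u r)))\<^sup>2 \<le> G\<^sup>2 * x\<^sup>2"
    using power_mono[OF \<open>norm (g (u r)) \<le> G * x\<close>, of 2] by (simp add: power_mult_distrib)
  moreover have "G * (x * y) \<le> G * (x\<^sup>2 + y\<^sup>2)"
    using \<open>0 \<le> G\<close> sum_squares_bound[of x y] mult_nonneg_nonneg[OF \<open>0 \<le> x\<close> \<open>0 \<le> y\<close>]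
    by (intro mult_left_mono) (auto simp: power2_eq_square)
  moreover have "0 \<le> G\<^sup>2 * x\<^sup>2"
    by simp
  ultimately have "lyapunov r \<le> z\<^sup>2 + y\<^sup>2 + G * (x\<^sup>2 + y\<^sup>2) + G\<^sup>2 * x\<^sup>2"
    unfolding lyapunov_def x_y_z_G_def[symmetric] by linarith
  also have "\<dots> \<le> (1 + G + G\<^sup>2) * (x\<^sup>2 + y\<^sup>2 + z\<^sup>2)"
    using \<open>0 \<le> G\<close> by (simp add: algebra_simps)
  finally show ?thesis
    by (simp add: x_y_z_G_def)
qed

lemma lyapunov_dissipation:
  assumes "0 \<le> r"
  shows "2 * a * norm (u r) * norm (u' r) + a * norm (u r) * norm (g (u r))
      - inner (g (u' r)) (u' r) - inner (S (u r)) (S (g (u r))) \<le> - decay_rate * lyapunov r"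
proof -
  define x y z G where "x = norm (u r)" "y = norm (u' r)" "z = norm (S (u r))" "G = norm g"
  define \<mu> C where "\<mu> = min \<kappa> \<eta>" "C = 1 + G + G\<^sup>2"
  have "0 < C" "0 < \<mu>"
    using kappa_pos eta_pos by (simp_all add: \<mu>_C_def x_y_z_G_def add_pos_nonneg)
  have "a * x * norm (g (u r)) \<le> a * x * (G * x)"
    using a_nonneg unfolding x_y_z_G_def by (intro mult_left_mono norm_blinfun) auto
  moreover have "c * y\<^sup>2 \<le> inner (g (u' r)) (u' r)" "\<rho> * x\<^sup>2 + \<eta> * z\<^sup>2 \<le> inner (S (u r)) (S (g (u r)))"
    unfolding x_y_z_G_def using g_coercive S_g_coercive[OF u_in_DS[OF \<open>0 \<le> r\<close>]] by auto
  moreover have "2 * a * x * y + a * G * x\<^sup>2 \<le> (\<rho> - \<kappa>) * x\<^sup>2 + (c - \<kappa>) * y\<^sup>2"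
    unfolding x_y_z_G_def by (rule margin)
  ultimately have "2 * a * x * y + a * x * norm (g (u r)) - inner (g (u' r)) (u' r) - inner (S (u r)) (S (g (u r)))
      \<le> - (\<kappa> * x\<^sup>2 + \<kappa> * y\<^sup>2 + \<eta> * z\<^sup>2)"
    by (simp add: power2_eq_square algebra_simps)
  also have "\<dots> \<le> - (\<mu> * (x\<^sup>2 + y\<^sup>2 + z\<^sup>2))"
  proof -
    have "\<mu> * x\<^sup>2 \<le> \<kappa> * x\<^sup>2" "\<mu> * y\<^sup>2 \<le> \<kappa> * y\<^sup>2" "\<mu> * z\<^sup>2 \<le> \<eta> * z\<^sup>2"
      unfolding \<mu>_C_def by (simp_all add: mult_right_mono)
    then show ?thesis
      by (simp add: distrib_left)
  qed
  also have "\<dots> \<le> - (\<mu> / C * lyapunov r)"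
  proof -
    have "\<mu> / C * lyapunov r \<le> \<mu> / C * (C * (x\<^sup>2 + y\<^sup>2 + z\<^sup>2))"
      using lyapunov_le[of r] \<open>0 < C\<close> \<open>0 < \<mu>\<close> unfolding \<mu>_C_def x_y_z_G_def
      by (intro mult_left_mono) (auto simp: algebra_simps)
    with \<open>0 < C\<close> show ?thesis
      by simp
  qed
  finally show ?thesis
    by (simp add: decay_rate_def \<mu>_C_def x_y_z_G_def)
qed


lemma lyapunov_cont: "continuous_on {0..} lyapunov"
  unfolding lyapunov_def using Su_cont u'_cont u_cont by (auto intro!: continuous_intros)

lemma lyapunov_decrease:
  assumes "0 < s" "s \<le> t"
  shows "lyapunov t - lyapunov s \<le> - decay_rate * integral {s..t} lyapunov"
proof -
  have "0 \<le> s"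
    using assms by simp
  have cont: "continuous_on {s..t} u" "continuous_on {s..t} (\<lambda>r. S (u r))" "continuous_on {s..t} u'"
      "continuous_on {s..t} (\<lambda>r. S (g (u r)))"
    using continuous_on_Icc_solution[OF \<open>0 \<le> s\<close>] continuous_on_Icc_of_atLeast[OF S_g_u_cont \<open>0 \<le> s\<close>]
    by auto
  define I\<^sub>1 where "I\<^sub>1 = integral {s..t} (\<lambda>r. inner (g (u' r)) (u' r))"
  define I\<^sub>2 where "I\<^sub>2 = integral {s..t} (\<lambda>r. inner (g (u' r)) (g (u r)))"
  define I\<^sub>3 where "I\<^sub>3 = integral {s..t} (\<lambda>r. inner (S (u r)) (S (g (u r))))"
  define J\<^sub>1 where "J\<^sub>1 = integral {s..t} (\<lambda>r. a * norm (u r) * norm (u' r))"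
  define J\<^sub>2 where "J\<^sub>2 = integral {s..t} (\<lambda>r. a * norm (u r) * norm (g (u r)))"
  have energy: "\<bar>((norm (S (u t)))\<^sup>2 + (norm (u' t))\<^sup>2 - ((norm (S (u s)))\<^sup>2 + (norm (u' s))\<^sup>2)) / 2 + I\<^sub>1\<bar> \<le> J\<^sub>1"
    unfolding I\<^sub>1_def J\<^sub>1_def by (rule energy_inequality[OF assms])
  have "integral {s..t} (\<lambda>r. inner (S (u r)) (S (g (u r))) + inner (g (u' r)) (g (u r)) - inner (u' r) (g (u' r)))
      = I\<^sub>3 + I\<^sub>2 - I\<^sub>1"
    unfolding I\<^sub>1_def I\<^sub>2_def I\<^sub>3_def using cont
    by (simp add: inner_commute[of "u' _"] integral_add integral_diff integrable_add integrable_continuous_real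
        continuous_intros)
  with weak_bound_along_g_u[OF \<open>0 \<le> s\<close> \<open>s \<le> t\<close>]
  have g_u: "\<bar>inner (u' t) (g (u t)) - inner (u' s) (g (u s)) + (I\<^sub>3 + I\<^sub>2 - I\<^sub>1)\<bar> \<le> J\<^sub>2"
    unfolding J\<^sub>2_def by simp
  have "lyapunov t - lyapunov s \<le> 2 * J\<^sub>1 + J\<^sub>2 - I\<^sub>1 - I\<^sub>3"
    using abs_le_D1[OF energy] abs_le_D1[OF g_u] norm_g_u_increment[OF \<open>0 \<le> s\<close> \<open>s \<le> t\<close>]
    unfolding lyapunov_def I\<^sub>2_def[symmetric] by argo
  also have "\<dots> = integral {s..t} (\<lambda>r. 2 * a * norm (u r) * norm (u' r) + a * norm (u r) * norm (g (u r))
      - inner (g (u' r)) (u' r) - inner (S (u r)) (S (g (u r))))"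
    unfolding I\<^sub>1_def I\<^sub>3_def J\<^sub>1_def J\<^sub>2_def using cont
    by (simp add: integral_add integral_diff integrable_add integrable_diff integrable_continuous_real
        continuous_intros mult.assoc)
  also have "\<dots> \<le> integral {s..t} (\<lambda>r. - decay_rate * lyapunov r)"
    using cont assms continuous_on_Icc_of_atLeast[OF lyapunov_cont \<open>0 \<le> s\<close>]
    by (intro integral_le integrable_continuous_real continuous_intros lyapunov_dissipation) auto
  finally show ?thesis
    by simp
qed

lemma lyapunov_decay:
  assumes "0 \<le> s" "s \<le> t"
  shows "lyapunov t \<le> lyapunov s * exp (- decay_rate * (t - s))"
proof -
  have positive: "lyapunov t \<le> lyapunov s' * exp (- decay_rate * (t - s'))" if "0 < s'" "s' \<le> t" for s'
  proof (rule gronwall_decay[OF \<open>s' \<le> t\<close> _ lyapunov_nonneg decay_rate_pos])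
    show "continuous_on {s'..t} lyapunov"
      using lyapunov_cont by (rule continuous_on_Icc_of_atLeast) (use that in simp)
    show "lyapunov y - lyapunov x \<le> - decay_rate * integral {x..y} lyapunov"
      if "s' \<le> x" "x \<le> y" "y \<le> t" for x y
      using that \<open>0 < s'\<close> by (intro lyapunov_decrease) auto
  qed
  consider "0 < s" | "s = t" | "s = 0" "0 < t"
    using assms by fastforce
  then show ?thesis
  proof cases
    case 1
    with assms(2) show ?thesis
      using positive by blast
  next
    case 2
    then show ?thesis
      by simp
  next
    case 3
    have cont: "continuous_on {0..} (\<lambda>s'. lyapunov s' * exp (- decay_rate * (t - s')))"
      by (intro continuous_intros lyapunov_cont)
    have "((\<lambda>s'. lyapunov s' * exp (- decay_rate * (t - s'))) \<longlongrightarrow> lyapunov 0 * exp (- decay_rate * (t - 0)))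
        (at 0 within {0..})"
      using bspec[OF cont[unfolded continuous_on_def], of 0] by simp
    then have "((\<lambda>s'. lyapunov s' * exp (- decay_rate * (t - s'))) \<longlongrightarrow> lyapunov 0 * exp (- decay_rate * (t - 0)))
        (at_right 0)"
      by (rule tendsto_within_subset) auto
    moreover have "\<forall>\<^sub>F s' in at_right 0. lyapunov t \<le> lyapunov s' * exp (- decay_rate * (t - s'))"
      using eventually_at_right_real[OF \<open>0 < t\<close>] by (rule eventually_mono) (rule positive; auto)
    ultimately have "lyapunov t \<le> lyapunov 0 * exp (- decay_rate * (t - 0))"
      by (rule tendsto_lowerbound) simp
    with \<open>s = 0\<close> show ?thesis
      by simp
  qed
qed

lemma norm_le_S_norm:
  assumes "0 \<le> r"
  shows "(norm (u r))\<^sup>2 \<le> max 0 K / \<rho> * (norm (S (u r)))\<^sup>2"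
proof -
  have "K * norm (S (u r)) \<le> max 0 K * norm (S (u r))"
    by (intro mult_right_mono) auto
  with S_g_bound[OF u_in_DS[OF assms]] have "norm (S (g (u r))) \<le> max 0 K * norm (S (u r))"
    by linarith
  have "\<rho> * (norm (u r))\<^sup>2 + \<eta> * (norm (S (u r)))\<^sup>2 \<le> inner (S (u r)) (S (g (u r)))"
    using S_g_coercive u_in_DS[OF assms] .
  also have "\<dots> \<le> norm (S (u r)) * norm (S (g (u r)))"
    by (rule norm_cauchy_schwarz)
  also have "\<dots> \<le> norm (S (u r)) * (max 0 K * norm (S (u r)))"
    using \<open>norm (S (g (u r))) \<le> max 0 K * norm (S (u r))\<close> by (rule mult_left_mono) simp
  also have "\<dots> = max 0 K * (norm (S (u r)))\<^sup>2"
    by (simp add: power2_eq_square)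
  moreover have "0 \<le> \<eta> * (norm (S (u r)))\<^sup>2"
    using eta_pos by simp
  ultimately have "\<rho> * (norm (u r))\<^sup>2 \<le> max 0 K * (norm (S (u r)))\<^sup>2"
    by linarith
  then have "\<rho> * (norm (u r))\<^sup>2 / \<rho> \<le> max 0 K * (norm (S (u r)))\<^sup>2 / \<rho>"
    using rho_pos by (rule divide_right_mono[OF _ less_imp_le])
  with rho_pos show ?thesis
    by simp
qed

lemma energy_decay:
  assumes "0 \<le> s" "s \<le> t"
  shows "(norm (S (u t)))\<^sup>2 + (norm (u' t))\<^sup>2
    \<le> 2 * (1 + norm g + (norm g)\<^sup>2) * (1 + max 0 K / \<rho>) * ((norm (S (u s)))\<^sup>2 + (norm (u' s))\<^sup>2)
      * exp (- decay_rate * (t - s))"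
proof -
  define C m where "C = 1 + norm g + (norm g)\<^sup>2" and "m = max 0 K / \<rho>"
  have "0 < C" "0 \<le> m * (norm (u' s))\<^sup>2"
    using rho_pos by (simp_all add: C_def m_def add_pos_nonneg)
  have "(1 + m) * ((norm (S (u s)))\<^sup>2 + (norm (u' s))\<^sup>2)
      = (norm (S (u s)))\<^sup>2 + (norm (u' s))\<^sup>2 + m * (norm (S (u s)))\<^sup>2 + m * (norm (u' s))\<^sup>2"
    by (simp add: algebra_simps)
  with norm_le_S_norm[OF \<open>0 \<le> s\<close>] \<open>0 \<le> m * (norm (u' s))\<^sup>2\<close>
  have "(norm (u s))\<^sup>2 + (norm (u' s))\<^sup>2 + (norm (S (u s)))\<^sup>2 \<le> (1 + m) * ((norm (S (u s)))\<^sup>2 + (norm (u' s))\<^sup>2)"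
    unfolding m_def by linarith
  with lyapunov_le[of s] \<open>0 < C\<close>
  have "lyapunov s \<le> C * ((1 + m) * ((norm (S (u s)))\<^sup>2 + (norm (u' s))\<^sup>2))"
    unfolding C_def by (meson mult_left_mono less_imp_le order_trans)
  then have lyapunov_s: "lyapunov s \<le> C * (1 + m) * ((norm (S (u s)))\<^sup>2 + (norm (u' s))\<^sup>2)"
    by (simp only: mult.assoc)
  have "(norm (S (u t)))\<^sup>2 + (norm (u' t))\<^sup>2 \<le> 2 * lyapunov t"
    by (rule energy_le_lyapunov)
  also have "\<dots> \<le> 2 * (lyapunov s * exp (- decay_rate * (t - s)))"
    using lyapunov_decay[OF assms] by simp
  also have "\<dots> \<le> 2 * (C * (1 + m) * ((norm (S (u s)))\<^sup>2 + (norm (u' s))\<^sup>2) * exp (- decay_rate * (t - s)))"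
    using lyapunov_s by (intro mult_left_mono mult_right_mono) auto
  finally show ?thesis
    by (simp only: C_def m_def mult.assoc)
qed

end

section \<open>Mild solutions\<close>

lemma mild_solution_has_integral_increment:
  assumes ms: "mild_solution DS S \<gamma> A u u'" and "v \<in> DS" "0 \<le> s" "s \<le> t"
  shows "((\<lambda>r. - (inner (S (u r)) (S v) + inner (A r (u r)) v + inner (\<gamma> (u' r)) v))
      has_integral inner (u' t - u' s) v) {s..t}"
proof -
  define f where "f = (\<lambda>r. - (inner (S (u r)) (S v) + inner (A r (u r)) v + inner (\<gamma> (u' r)) v))"
  have has_int: "(f has_integral inner (u' \<tau>) v - inner (u' 0) v) {0..\<tau>}" if "0 \<le> \<tau>" for \<tau>
    using ms \<open>v \<in> DS\<close> that unfolding mild_solution_def f_def by simp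
  have "f integrable_on {s..t}"
    using has_int[of t] assms(3,4) by (auto intro: integrable_subinterval_real)
  moreover have "integral {0..s} f + integral {s..t} f = integral {0..t} f"
    using has_int[of t] assms(3,4) by (intro Henstock_Kurzweil_Integration.integral_combine) auto
  then have "integral {s..t} f = inner (u' t - u' s) v"
    using integral_unique[OF has_int[of s]] integral_unique[OF has_int[of t]] assms(3,4)
    by (simp add: inner_diff_left)
  ultimately show ?thesis
    unfolding f_def[symmetric] by (metis has_integral_integrable_integral)
qed

lemma mild_solution_weak_bound:
  fixes DS :: "'h::{real_inner,complete_space} set"
  assumes ms: "mild_solution DS S \<gamma> A u u'"
    and A_bound: "AE r in lborel. 0 \<le> r \<longrightarrow> norm (A r) \<le> a"
    and "v \<in> DS" "0 \<le> s" "s \<le> t"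
  shows "\<bar>inner (u' t - u' s) v + integral {s..t} (\<lambda>r. inner (S (u r)) (S v) + inner (\<gamma> (u' r)) v)\<bar>
    \<le> norm v * integral {s..t} (\<lambda>r. a * norm (u r))"
proof -
  define c p where "c r = inner (S (u r)) (S v) + inner (\<gamma> (u' r)) v"
    and "p r = inner (A r (u r)) v" for r
  have has_int: "((\<lambda>r. - (c r + p r)) has_integral inner (u' t - u' s) v) {s..t}"
    using mild_solution_has_integral_increment[OF ms assms(3-5)] unfolding c_def p_def
    by (simp add: algebra_simps)
  have cont: "continuous_on {s..t} u" "continuous_on {s..t} (\<lambda>r. S (u r))" "continuous_on {s..t} u'"
    using ms \<open>0 \<le> s\<close> unfolding mild_solution_def by (auto elim!: continuous_on_Icc_of_atLeast)
  then have c_int: "c integrable_on {s..t}"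
    unfolding c_def by (intro integrable_continuous_real continuous_intros)
  from integrable_neg[OF integrable_add[OF has_integral_integrable[OF has_int] c_int]]
  have p_int: "p integrable_on {s..t}"
    by simp
  have p_eq: "integral {s..t} p = - (inner (u' t - u' s) v + integral {s..t} c)"
    using integral_unique[OF has_int] c_int p_int by (simp add: integral_diff integral_neg integrable_neg)
  have "norm (integral {s..t} p) \<le> integral {s..t} (\<lambda>r. norm v * (a * norm (u r)))"
  proof (rule integral_norm_bound_integral_AE[OF p_int])
    show "(\<lambda>r. norm v * (a * norm (u r))) integrable_on {s..t}"
      using cont by (intro integrable_continuous_real continuous_intros)
    show "AE r in lborel. r \<in> {s..t} \<longrightarrow> norm (p r) \<le> norm v * (a * norm (u r))"
      using A_bound
    proof (rule eventually_mono, intro impI)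
      fix r
      assume "0 \<le> r \<longrightarrow> norm (A r) \<le> a" "r \<in> {s..t}"
      with \<open>0 \<le> s\<close> have "norm (A r) * norm (u r) \<le> a * norm (u r)"
        by (intro mult_right_mono) auto
      then have "norm (A r (u r)) \<le> a * norm (u r)"
        using norm_blinfun order_trans by blast
      then have "norm (A r (u r)) * norm v \<le> a * norm (u r) * norm v"
        by (rule mult_right_mono) simp
      then show "norm (p r) \<le> norm v * (a * norm (u r))"
        unfolding p_def using Cauchy_Schwarz_ineq2[of "A r (u r)" v] by (simp add: mult.commute)
    qed
  qed
  with p_eq show ?thesis
    unfolding c_def p_def by simp
qed

lemma mild_solution_weak_damped_wave:
  assumes "mild_solution DS S \<gamma> A u u'" "lin_op_on DS S"
    and "AE r in lborel. 0 \<le> r \<longrightarrow> norm (A r) \<le> a" "0 \<le> a"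
  shows "weak_damped_wave DS S \<gamma> u u' a"
  using assms mild_solution_weak_bound[OF assms(1,3)]
  by unfold_locales (auto simp: mild_solution_def)

theorem theorem4p1:
  fixes DB :: "'h::{real_inner,complete_space} set" and B :: "'h \<Rightarrow> 'h"
    and DS :: "'h set" and S :: "'h \<Rightarrow> 'h"
    and \<gamma> :: "'h \<Rightarrow>\<^sub>L 'h" and A :: "real \<Rightarrow> ('h \<Rightarrow>\<^sub>L 'h)"
    and c \<rho> \<eta> :: real
  assumes B_sa: "self_adjoint_op DB B"
    and B_coercive: "\<exists>b>0. \<forall>v\<in>DB. inner (B v) v \<ge> b * (norm v)\<^sup>2"
    and S_sqrt: "is_sqrt_op DB B DS S"
    and c_pos: "c > 0"
    and gamma_coercive: "\<forall>v. inner (blinfun_apply \<gamma> v) v \<ge> c * (norm v)\<^sup>2"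
    and A_meas: "A \<in> borel_measurable (restrict_space lborel {0..})"
    and A_bdd: "esssup (restrict_space lborel {0..}) (\<lambda>t. ereal (norm (A t))) < \<infinity>"
    and gamma_V: "\<forall>v\<in>DS. blinfun_apply \<gamma> v \<in> DS"
    and gamma_V_bdd: "\<exists>K. \<forall>v\<in>DS. norm (S (blinfun_apply \<gamma> v)) \<le> K * norm (S v)"
    and rho_pos: "\<rho> > 0" and eta_pos: "\<eta> > 0"
    and key: "\<forall>v\<in>DS. inner (S v) (S (blinfun_apply \<gamma> v)) \<ge> \<rho> * (norm v)\<^sup>2 + \<eta> * (norm (S v))\<^sup>2"
    and A_small: "esssup (restrict_space lborel {0..}) (\<lambda>t. ereal (norm (A t)))
                  < ereal (sqrt (c * \<rho> + c\<^sup>2 / 4 * (norm \<gamma>)\<^sup>2) - c / 2 * norm \<gamma>)"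
  shows "\<exists>\<delta>>0. \<exists>M>0. \<forall>u u'. mild_solution DS S \<gamma> A u u' \<longrightarrow>
           (\<forall>s t. 0 \<le> s \<longrightarrow> s \<le> t \<longrightarrow>
              (norm (S (u t)))\<^sup>2 + (norm (u' t))\<^sup>2
                \<le> M * ((norm (S (u s)))\<^sup>2 + (norm (u' s))\<^sup>2) * exp (- \<delta> * (t - s)))"
proof -
  obtain K where K: "\<forall>v\<in>DS. norm (S (\<gamma> v)) \<le> K * norm (S v)"
    using gamma_V_bdd by blast
  obtain a where "0 \<le> a" and a_small: "a < sqrt (c * \<rho> + c\<^sup>2 / 4 * (norm \<gamma>)\<^sup>2) - c / 2 * norm \<gamma>"
    and "AE r in restrict_space lborel {0..}. norm (A r) \<le> a"
    using AE_le_of_esssup_less[OF A_small damping_threshold_pos[OF c_pos rho_pos norm_ge_zero]] .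
  then have A_bound: "AE r in lborel. 0 \<le> r \<longrightarrow> norm (A r) \<le> a"
    by (simp add: AE_restrict_space_iff)
  obtain \<kappa> where \<kappa>: "\<kappa> > 0" "\<And>x y. 2 * a * x * y + a * norm \<gamma> * x\<^sup>2 \<le> (\<rho> - \<kappa>) * x\<^sup>2 + (c - \<kappa>) * y\<^sup>2"
    using damping_margin[OF \<open>0 \<le> a\<close> c_pos norm_ge_zero a_small] by blast
  have "lin_op_on DS S"
    using S_sqrt by (simp add: is_sqrt_op_def self_adjoint_op_def)
  have "(norm (S (u t)))\<^sup>2 + (norm (u' t))\<^sup>2 \<le> 2 * (1 + norm \<gamma> + (norm \<gamma>)\<^sup>2) * (1 + max 0 K / \<rho>)
      * ((norm (S (u s)))\<^sup>2 + (norm (u' s))\<^sup>2) * exp (- (min \<kappa> \<eta> / (1 + norm \<gamma> + (norm \<gamma>)\<^sup>2)) * (t - s))"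
    if "mild_solution DS S \<gamma> A u u'" "0 \<le> s" "s \<le> t" for u u' s t
  proof -
    interpret damped_wave_decay DS S \<gamma> u u' a K c \<rho> \<eta> \<kappa>
      using mild_solution_weak_damped_wave[OF that(1) \<open>lin_op_on DS S\<close> A_bound \<open>0 \<le> a\<close>]
        gamma_V K gamma_coercive key rho_pos eta_pos \<kappa>
      by (intro damped_wave_decay.intro damped_wave_decay_axioms.intro) auto
    show ?thesis
      using energy_decay[OF that(2,3)] unfolding decay_rate_def .
  qed
  moreover have "0 < min \<kappa> \<eta> / (1 + norm \<gamma> + (norm \<gamma>)\<^sup>2)" "0 < 2 * (1 + norm \<gamma> + (norm \<gamma>)\<^sup>2) * (1 + max 0 K / \<rho>)"
    using \<open>\<kappa> > 0\<close> eta_pos rho_pos by (simp_all add: add_pos_nonneg)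
  ultimately show ?thesis
    by blast
qed

end
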